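(* Let $X,A$ be non-empty finite sets, $\mathcal R$ a resource over $(X,A)$, $H_R$ a Hilbert space, $\xi\in\mathbb C^X\otimes H_R$ a unit vector, and $P\in\mathcal B(\mathbb C^A\otimes H_R)$ a positive contraction with countable discrete spectrum and spectral decomposition $P=\sum_{n=1}^\infty\lambda_n\gamma_n\gamma_n^*$. Let $\rho_n=\sqrt{\lambda_n}\,\overline{{\rm Tr}_R(\xi\gamma_n^* )}\in\mathcal S_1^{A,X}$, $n\in\mathbb N$. Then $$\omega_{\mathcal R}(\xi,P)=\|[\rho_n]_{n\in\mathbb N}\|^2_{M_{\infty,1}(\mathcal O^{\mathcal R}_{X,A})}.$$
   Context: $\mathcal S_1^{A,X}$ is the space of linear operators $\mathbb C^A\to\mathbb C^X$ with matrix units $\epsilon_{x,a}=e_xe_a^*$; ${\rm Tr}_R$ is the partial trace over $H_R$, so ${\rm Tr}_R(\xi\gamma_n^* )\in\mathcal S_1^{A,X}$, and the overline denotes entrywise complex conjugation with respect to the standard bases. A block operator isometry over $(X,A)$ is an isometry $U=(U_{a,x})_{a\in A,x\in X}:H^X\to K^A$, $U_{a,x}\in\mathcal B(H,K)$; $\phi_U:\mathcal S_1^{A,X}\to\mathcal B(H,K)$ is linear with $\phi_U(\epsilon_{x,a})=U_{a,x}$. For a normal state $\sigma$ on $\mathcal B(H)$, $\Gamma_{U,\sigma}:M_X\to M_A$ is the channel $\Gamma_{U,\sigma}(\epsilon_{x,x'})=\sum_{a,a'\in A}\sigma(U_{a,x}^*U_{a',x'})\epsilon_{a,a'}$. A resource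 over $(X,A)$ is a family $\mathcal R$ of block operator isometries (with varying Hilbert spaces) closed under finite direct sums (entries $U_{a,x}\oplus U'_{a,x}$) and separating (for each nonzero $S\in\mathcal S_1^{A,X}$ some $U\in\mathcal R$ has $\phi_U(S)\neq0$). $\mathsf{QC}(\mathcal R)=\{\Gamma_{U,\sigma}:U\in\mathcal R,\ \sigma\text{ a normal state}\}$, and $\omega_{\mathcal R}(\xi,P)=\sup_{\Gamma\in\mathsf{QC}(\mathcal R)}{\rm Tr}((\Gamma\otimes{\rm id})(\xi\xi^* )P)$. $\mathcal O^{\mathcal R}_{X,A}$ is the vector space $\mathcal S_1^{A,X}$ with the operator space structure $\|u\|^{(n)}=\sup_{U\in\mathcal R}\|\phi_U^{(n)}(u)\|$, $u\in M_n(\mathcal S_1^{A,X})$. For a column $[\rho_n]_{n\in\mathbb N}$, $\|[\rho_n]\|_{M_{\infty,1}}=\sup_N\|[\rho_n]_{n=1}^N\|_{M_{N,1}}$. *)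

theory Defs
  imports "HOL-Analysis.Analysis"
begin

text \<open>Every Hilbert space is realised as l2(I) for an index set I.
  Vectors are functions into complex vanishing off I; bounded operators l2(J) to l2(I)
  are given by their matrices M i j = inner (M e_j) e_i.\<close>

definition l2 :: "'i set \<Rightarrow> ('i \<Rightarrow> complex) \<Rightarrow> bool" where
  "l2 I f \<longleftrightarrow> (\<forall>i. i \<notin> I \<longrightarrow> f i = 0) \<and> (\<lambda>i. (cmod (f i))^2) summable_on UNIV"

definition vnorm :: "('i \<Rightarrow> complex) \<Rightarrow> real" where
  "vnorm f = sqrt (infsum (\<lambda>i. (cmod (f i))^2) UNIV)"

text \<open>Inner product, linear in the first argument.\<close>
definition vinner :: "('i \<Rightarrow> complex) \<Rightarrow> ('i \<Rightarrow> complex) \<Rightarrow> complex" where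
  "vinner f g = infsum (\<lambda>i. f i * cnj (g i)) UNIV"

definition mapply :: "('i \<Rightarrow> 'j \<Rightarrow> complex) \<Rightarrow> ('j \<Rightarrow> complex) \<Rightarrow> ('i \<Rightarrow> complex)" where
  "mapply M f = (\<lambda>i. infsum (\<lambda>j. M i j * f j) UNIV)"

definition mmul :: "('i \<Rightarrow> 'j \<Rightarrow> complex) \<Rightarrow> ('j \<Rightarrow> 'k \<Rightarrow> complex) \<Rightarrow> ('i \<Rightarrow> 'k \<Rightarrow> complex)" where
  "mmul M N = (\<lambda>i k. infsum (\<lambda>j. M i j * N j k) UNIV)"

definition adj :: "('i \<Rightarrow> 'j \<Rightarrow> complex) \<Rightarrow> ('j \<Rightarrow> 'i \<Rightarrow> complex)" where
  "adj M = (\<lambda>j i. cnj (M i j))"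

definition bop :: "'j set \<Rightarrow> 'i set \<Rightarrow> ('i \<Rightarrow> 'j \<Rightarrow> complex) \<Rightarrow> bool" where
  "bop J I M \<longleftrightarrow> (\<forall>i j. (i \<notin> I \<or> j \<notin> J) \<longrightarrow> M i j = 0) \<and>
     (\<exists>C. \<forall>f. l2 J f \<longrightarrow> (\<forall>i. (\<lambda>j. M i j * f j) summable_on UNIV) \<and>
              l2 I (mapply M f) \<and> vnorm (mapply M f) \<le> C * vnorm f)"

definition opnorm :: "'j set \<Rightarrow> ('i \<Rightarrow> 'j \<Rightarrow> complex) \<Rightarrow> real" where
  "opnorm J M = Sup {vnorm (mapply M f) | f. l2 J f \<and> vnorm f \<le> 1}"

definition positive_op :: "('i \<Rightarrow> 'i \<Rightarrow> complex) \<Rightarrow> bool" where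
  "positive_op P \<longleftrightarrow> (\<forall>f. l2 UNIV f \<longrightarrow>
      Im (vinner (mapply P f) f) = 0 \<and> 0 \<le> Re (vinner (mapply P f) f))"

definition mtrace :: "('i \<Rightarrow> 'i \<Rightarrow> complex) \<Rightarrow> complex" where
  "mtrace M = infsum (\<lambda>i. M i i) UNIV"

definition rank1 :: "('i \<Rightarrow> complex) \<Rightarrow> ('j \<Rightarrow> complex) \<Rightarrow> ('i \<Rightarrow> 'j \<Rightarrow> complex)" where
  "rank1 u v = (\<lambda>i j. u i * cnj (v j))"

text \<open>Partial trace over H_R = l2('r): C^A (x) H_R \<rightarrow> C^X (x) H_R  to  C^A \<rightarrow> C^X.\<close>
definition ptraceR :: "('x \<times> 'r \<Rightarrow> 'a \<times> 'r \<Rightarrow> complex) \<Rightarrow> ('x \<Rightarrow> 'a \<Rightarrow> complex)" where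
  "ptraceR M = (\<lambda>x a. infsum (\<lambda>r. M (x, r) (a, r)) UNIV)"

text \<open>Block operator over (X,A): family of entries U a x : l2(I) \<rightarrow> l2(J);
  the full operator l2(X \<times> I) \<rightarrow> l2(A \<times> J).\<close>
definition blockmat :: "('a \<Rightarrow> 'x \<Rightarrow> 'u \<Rightarrow> 'v \<Rightarrow> complex) \<Rightarrow> ('a \<times> 'u \<Rightarrow> 'x \<times> 'v \<Rightarrow> complex)" where
  "blockmat U = (\<lambda>(a, j) (x, i). U a x j i)"

definition block_isometry :: "'v set \<Rightarrow> 'u set \<Rightarrow> ('a \<Rightarrow> 'x \<Rightarrow> 'u \<Rightarrow> 'v \<Rightarrow> complex) \<Rightarrow> bool" where
  "block_isometry I J U \<longleftrightarrow> (\<forall>a x. bop I J (U a x)) \<and>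
     (\<forall>f. l2 (UNIV \<times> I) f \<longrightarrow> vnorm (mapply (blockmat U) f) = vnorm f)"

text \<open>phi_U(S) = sum S_{x,a} U_{a,x}, where S : C^A \<rightarrow> C^X has entries S x a.\<close>
definition phiU :: "('a::finite \<Rightarrow> 'x::finite \<Rightarrow> 'u \<Rightarrow> 'v \<Rightarrow> complex) \<Rightarrow> ('x \<Rightarrow> 'a \<Rightarrow> complex) \<Rightarrow> ('u \<Rightarrow> 'v \<Rightarrow> complex)" where
  "phiU U S = (\<lambda>j i. \<Sum>x\<in>UNIV. \<Sum>a\<in>UNIV. S x a * U a x j i)"

definition dsum_mat :: "('u \<Rightarrow> 'v \<Rightarrow> complex) \<Rightarrow> ('u \<Rightarrow> 'v \<Rightarrow> complex) \<Rightarrow> ('u + 'u \<Rightarrow> 'v + 'v \<Rightarrow> complex)" where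
  "dsum_mat M M' = (\<lambda>p q. case (p, q) of (Inl j, Inl i) \<Rightarrow> M j i | (Inr j, Inr i) \<Rightarrow> M' j i | _ \<Rightarrow> 0)"

text \<open>A resource over (X,A): block operator isometries (Hilbert spaces l2(I), l2(J), I,J \<subseteq> 'u),
  closed under finite direct sums (up to relabelling of the bases), separating.\<close>
definition resource :: "('u set \<times> 'u set \<times> ('a::finite \<Rightarrow> 'x::finite \<Rightarrow> 'u \<Rightarrow> 'u \<Rightarrow> complex)) set \<Rightarrow> bool" where
  "resource R \<longleftrightarrow>
     (\<forall>(I, J, U) \<in> R. block_isometry I J U) \<and>
     (\<forall>(I, J, U) \<in> R. \<forall>(I', J', U') \<in> R. \<exists>(I'', J'', W) \<in> R. \<exists>p q.
         bij_betw p I'' (I <+> I') \<and> bij_betw q J'' (J <+> J') \<and>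
         (\<forall>a x j i. j \<in> J'' \<longrightarrow> i \<in> I'' \<longrightarrow> W a x j i = dsum_mat (U a x) (U' a x) (q j) (p i))) \<and>
     (\<forall>S :: 'x \<Rightarrow> 'a \<Rightarrow> complex. S \<noteq> (\<lambda>_ _. 0) \<longrightarrow> (\<exists>(I, J, U) \<in> R. phiU U S \<noteq> (\<lambda>_ _. 0)))"

text \<open>Normal state on B(l2(I)), given by a density operator sum_n v_n v_n^*:
  sigma(T) = sum_n <T v_n, v_n>, sum_n |v_n|^2 = 1.\<close>
definition normal_state :: "'u set \<Rightarrow> (('u \<Rightarrow> 'u \<Rightarrow> complex) \<Rightarrow> complex) \<Rightarrow> bool" where
  "normal_state I \<sigma> \<longleftrightarrow> (\<exists>v :: nat \<Rightarrow> 'u \<Rightarrow> complex.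
      (\<forall>n. l2 I (v n)) \<and> (\<lambda>n. (vnorm (v n))^2) sums 1 \<and>
      (\<forall>T. bop I I T \<longrightarrow> (\<lambda>n. vinner (mapply T (v n)) (v n)) sums \<sigma> T))"

text \<open>The channel Gamma_{U,sigma}: M_X \<rightarrow> M_A (extended linearly from matrix units).\<close>
definition GammaU :: "('a::finite \<Rightarrow> 'x::finite \<Rightarrow> 'u \<Rightarrow> 'u \<Rightarrow> complex) \<Rightarrow> (('u \<Rightarrow> 'u \<Rightarrow> complex) \<Rightarrow> complex)
     \<Rightarrow> ('x \<Rightarrow> 'x \<Rightarrow> complex) \<Rightarrow> ('a \<Rightarrow> 'a \<Rightarrow> complex)" where
  "GammaU U \<sigma> m = (\<lambda>a a'. \<Sum>x\<in>UNIV. \<Sum>x'\<in>UNIV. m x x' * \<sigma> (mmul (adj (U a x)) (U a' x')))"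

definition QC :: "('u set \<times> 'u set \<times> ('a::finite \<Rightarrow> 'x::finite \<Rightarrow> 'u \<Rightarrow> 'u \<Rightarrow> complex)) set
     \<Rightarrow> (('x \<Rightarrow> 'x \<Rightarrow> complex) \<Rightarrow> ('a \<Rightarrow> 'a \<Rightarrow> complex)) set" where
  "QC R = {GammaU U \<sigma> | I J U \<sigma>. (I, J, U) \<in> R \<and> normal_state I \<sigma>}"

definition tensor_id :: "(('x \<Rightarrow> 'x \<Rightarrow> complex) \<Rightarrow> ('a \<Rightarrow> 'a \<Rightarrow> complex)) \<Rightarrow> ('x \<times> 'r \<Rightarrow> 'x \<times> 'r \<Rightarrow> complex)
     \<Rightarrow> ('a \<times> 'r \<Rightarrow> 'a \<times> 'r \<Rightarrow> complex)" where
  "tensor_id \<Gamma> Y = (\<lambda>(a, r) (a', r'). \<Gamma> (\<lambda>x x'. Y (x, r) (x', r')) a a')"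

definition omegaR :: "('u set \<times> 'u set \<times> ('a::finite \<Rightarrow> 'x::finite \<Rightarrow> 'u \<Rightarrow> 'u \<Rightarrow> complex)) set
     \<Rightarrow> ('x \<times> 'r \<Rightarrow> complex) \<Rightarrow> ('a \<times> 'r \<Rightarrow> 'a \<times> 'r \<Rightarrow> complex) \<Rightarrow> real" where
  "omegaR R \<xi> P = Sup {Re (mtrace (mmul (tensor_id \<Gamma> (rank1 \<xi> \<xi>)) P)) | \<Gamma>. \<Gamma> \<in> QC R}"

text \<open>Matrix norm on M_n(O^R_{X,A}): u = (u k l)_{k,l<n}, norm = sup over U of the norm of
  phi_U^(n)(u) as an operator l2({..<n} \<times> I) \<rightarrow> l2({..<n} \<times> J).\<close>
definition ampl :: "('a::finite \<Rightarrow> 'x::finite \<Rightarrow> 'u \<Rightarrow> 'u \<Rightarrow> complex) \<Rightarrow> nat \<Rightarrow> (nat \<Rightarrow> nat \<Rightarrow> ('x \<Rightarrow> 'a \<Rightarrow> complex))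
     \<Rightarrow> (nat \<times> 'u \<Rightarrow> nat \<times> 'u \<Rightarrow> complex)" where
  "ampl U n u = (\<lambda>(k, j) (l, i). if k < n \<and> l < n then phiU U (u k l) j i else 0)"

definition Mn_norm :: "('u set \<times> 'u set \<times> ('a::finite \<Rightarrow> 'x::finite \<Rightarrow> 'u \<Rightarrow> 'u \<Rightarrow> complex)) set
     \<Rightarrow> nat \<Rightarrow> (nat \<Rightarrow> nat \<Rightarrow> ('x \<Rightarrow> 'a \<Rightarrow> complex)) \<Rightarrow> real" where
  "Mn_norm R n u = (SUP t\<in>R. (case t of (I, J, U) \<Rightarrow> opnorm ({..<n} \<times> I) (ampl U n u)))"

text \<open>M_{N,1} norm of the column [rho_0,...,rho_{N-1}] (embedded as first column of M_N),
  and the M_{infinity,1} norm as the supremum over N.\<close>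
definition MN1_norm :: "('u set \<times> 'u set \<times> ('a::finite \<Rightarrow> 'x::finite \<Rightarrow> 'u \<Rightarrow> 'u \<Rightarrow> complex)) set
     \<Rightarrow> (nat \<Rightarrow> ('x \<Rightarrow> 'a \<Rightarrow> complex)) \<Rightarrow> nat \<Rightarrow> real" where
  "MN1_norm R \<rho> N = Mn_norm R N (\<lambda>k l. if l = 0 then \<rho> k else (\<lambda>_ _. 0))"

definition Minf1_norm :: "('u set \<times> 'u set \<times> ('a::finite \<Rightarrow> 'x::finite \<Rightarrow> 'u \<Rightarrow> 'u \<Rightarrow> complex)) set
     \<Rightarrow> (nat \<Rightarrow> ('x \<Rightarrow> 'a \<Rightarrow> complex)) \<Rightarrow> real" where
  "Minf1_norm R \<rho> = (SUP N. MN1_norm R \<rho> N)"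

text \<open>Spectral decomposition P = sum_{n \<in> N} lam_n gamma_n gamma_n^* (strong convergence),
  (gamma_n)_{n \<in> N} orthonormal, N \<subseteq> nat countable index set; terms off N are zero.\<close>
definition spectral_decomp :: "('i \<Rightarrow> 'i \<Rightarrow> complex) \<Rightarrow> nat set \<Rightarrow> (nat \<Rightarrow> real) \<Rightarrow> (nat \<Rightarrow> 'i \<Rightarrow> complex) \<Rightarrow> bool" where
  "spectral_decomp P Nidx lam \<gamma> \<longleftrightarrow>
     (\<forall>n\<in>Nidx. l2 UNIV (\<gamma> n) \<and> vnorm (\<gamma> n) = 1) \<and>
     (\<forall>m\<in>Nidx. \<forall>n\<in>Nidx. m \<noteq> n \<longrightarrow> vinner (\<gamma> m) (\<gamma> n) = 0) \<and>
     (\<forall>n. n \<notin> Nidx \<longrightarrow> lam n = 0 \<and> \<gamma> n = (\<lambda>_. 0)) \<and>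
     (\<forall>f. l2 UNIV f \<longrightarrow>
        (\<lambda>N. vnorm (\<lambda>i. mapply P f i - (\<Sum>n<N. complex_of_real (lam n) * vinner f (\<gamma> n) * \<gamma> n i)))
          \<longlonglongrightarrow> 0)"

definition rho :: "('x \<times> 'r \<Rightarrow> complex) \<Rightarrow> (nat \<Rightarrow> real) \<Rightarrow> (nat \<Rightarrow> 'a \<times> 'r \<Rightarrow> complex) \<Rightarrow> nat \<Rightarrow> ('x \<Rightarrow> 'a \<Rightarrow> complex)" where
  "rho \<xi> lam \<gamma> n = (\<lambda>x a. complex_of_real (sqrt (lam n)) * cnj (ptraceR (rank1 \<xi> (\<gamma> n)) x a))"

end

theory Submission
  imports Defs
begin

(* Represent the normal state sigma by density vectors v_k.  Then
   (Gamma_{U,sigma} (x) id)(xi xi^* ) is the positive operator sum_{k,j} u_kj u_kj^*, with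
   u_kj(a, r) = sum_x xi(x, r) conj((U_{a,x} v_k)_j), so its trace against
   P = sum_n lam_n gamma_n gamma_n^* is sum_{k,j,n} lam_n |<u_kj, gamma_n>|^2.  Unfolding rho_n
   shows lam_n |<u_kj, gamma_n>|^2 = |(phi_U(rho_n) v_k)_j|^2, so the value of the channel is
   sum_k ||[phi_U(rho_n)]_n v_k||^2, a convex combination of squared norms of the column
   [phi_U(rho_n)]_n on unit vectors.  Vector states realise every such unit vector, hence omega
   is the supremum of these squared norms over U in R, which is the squared M_{infinity,1} norm
   of [rho_n]. *)

section \<open>Infinite sums\<close>

lemma has_sum_diff:
  fixes f g :: "'i \<Rightarrow> 'b::topological_ab_group_add"
  assumes "(f has_sum a) A" "(g has_sum b) A"
  shows "((\<lambda>x. f x - g x) has_sum (a - b)) A"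
  using has_sum_add[OF assms(1) has_sum_uminus[of g A "-b", THEN iffD2]] assms(2) by simp

lemma infsum_diff:
  fixes f g :: "'i \<Rightarrow> 'b::{topological_ab_group_add,t2_space}"
  shows "f summable_on A \<Longrightarrow> g summable_on A \<Longrightarrow> infsum (\<lambda>x. f x - g x) A = infsum f A - infsum g A"
  by (rule infsumI) (intro has_sum_diff has_sum_infsum)

lemma has_sum_sum:
  fixes f :: "'x \<Rightarrow> 'i \<Rightarrow> 'b::topological_comm_monoid_add"
  assumes "finite S" "\<And>x. x \<in> S \<Longrightarrow> (f x has_sum a x) B"
  shows "((\<lambda>i. \<Sum>x\<in>S. f x i) has_sum (\<Sum>x\<in>S. a x)) B"
  using assms by (induction S rule: finite_induct) (auto intro: has_sum_add)

lemma summable_on_sum: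
  fixes f :: "'x \<Rightarrow> 'i \<Rightarrow> 'b::{topological_comm_monoid_add,t2_space}"
  shows "finite S \<Longrightarrow> (\<And>x. x \<in> S \<Longrightarrow> f x summable_on B) \<Longrightarrow> (\<lambda>i. \<Sum>x\<in>S. f x i) summable_on B"
  by (rule has_sum_imp_summable, rule has_sum_sum) (auto intro: has_sum_infsum)

lemma infsum_sum:
  fixes f :: "'x \<Rightarrow> 'i \<Rightarrow> 'b::{topological_comm_monoid_add,t2_space}"
  shows "finite S \<Longrightarrow> (\<And>x. x \<in> S \<Longrightarrow> f x summable_on B) \<Longrightarrow>
    infsum (\<lambda>i. \<Sum>x\<in>S. f x i) B = (\<Sum>x\<in>S. infsum (f x) B)"
  by (rule infsumI) (auto intro: has_sum_sum)

lemma has_sum_Times_finite: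
  fixes g :: "'x \<Rightarrow> 'i \<Rightarrow> 'b::topological_comm_monoid_add"
  assumes "finite A" "\<And>x. x \<in> A \<Longrightarrow> (g x has_sum s x) B"
  shows "((\<lambda>(x, i). g x i) has_sum (\<Sum>x\<in>A. s x)) (A \<times> B)"
  using assms
proof (induction A rule: finite_induct)
  case empty
  then show ?case by simp
next
  case (insert x A)
  have "((\<lambda>(x, i). g x i) has_sum s x) (Pair x ` B)"
    using insert.prems by (subst has_sum_reindex) (auto simp: inj_on_def o_def)
  then have "((\<lambda>(x, i). g x i) has_sum (s x + (\<Sum>x\<in>A. s x))) (Pair x ` B \<union> A \<times> B)"
    using insert by (intro has_sum_Un_disjoint) auto
  moreover have "Pair x ` B \<union> A \<times> B = insert x A \<times> B"
    by auto
  ultimately show ?case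
    using insert by simp
qed

lemma infsum_Times_finite:
  fixes g :: "'x \<Rightarrow> 'i \<Rightarrow> 'b::{topological_comm_monoid_add,t2_space}"
  shows "finite A \<Longrightarrow> (\<And>x. x \<in> A \<Longrightarrow> g x summable_on B) \<Longrightarrow>
    infsum (\<lambda>(x, i). g x i) (A \<times> B) = (\<Sum>x\<in>A. infsum (g x) B)"
  by (rule infsumI) (auto intro: has_sum_Times_finite)

lemma summable_on_Times_finite:
  fixes g :: "'x \<Rightarrow> 'i \<Rightarrow> 'b::{topological_comm_monoid_add,t2_space}"
  shows "finite A \<Longrightarrow> (\<And>x. x \<in> A \<Longrightarrow> g x summable_on B) \<Longrightarrow> (\<lambda>(x, i). g x i) summable_on (A \<times> B)"
  by (rule has_sum_imp_summable, rule has_sum_Times_finite) (auto intro: has_sum_infsum)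

lemma has_sum_Sigma_nonneg:
  fixes f :: "'a \<times> 'b \<Rightarrow> real"
  assumes "\<And>x. x \<in> A \<Longrightarrow> ((\<lambda>y. f (x, y)) has_sum g x) (B x)" and "(g has_sum S) A"
    and "\<And>x y. x \<in> A \<Longrightarrow> y \<in> B x \<Longrightarrow> 0 \<le> f (x, y)"
  shows "(f has_sum S) (Sigma A B)"
  by (rule has_sum_SigmaI[OF assms(1,2) summable_on_SigmaI[OF assms(1) has_sum_imp_summable[OF assms(2)] assms(3)]])

lemma summable_on_Times_abs_bound:
  fixes H :: "'m \<Rightarrow> 'q \<Rightarrow> complex"
  assumes "\<And>m. H m summable_on UNIV"
    and "\<And>m. infsum (\<lambda>q. cmod (H m q)) UNIV \<le> B m" and "B summable_on UNIV"
  shows "(\<lambda>(m, q). H m q) summable_on UNIV \<times> UNIV"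
proof -
  have "(\<lambda>m. infsum (\<lambda>q. cmod (H m q)) UNIV) summable_on UNIV"
    by (rule summable_on_comparison_test[OF assms(3)]) (auto intro: assms(2) infsum_nonneg)
  then have "(\<lambda>z. norm ((\<lambda>(m, q). H m q) z)) summable_on Sigma UNIV (\<lambda>_. UNIV)"
    using assms(1) summable_on_iff_abs_summable_on_complex
    by (intro Infinite_Sum.abs_summable_on_Sigma_iff[where f="\<lambda>(m, q). H m q", THEN iffD2]) (auto simp: infsum_nonneg)
  then show ?thesis
    by (simp add: abs_summable_summable)
qed

lemma infsum_if_in_finite:
  fixes g :: "'i \<Rightarrow> 'b::{comm_monoid_add,t2_space}"
  assumes "finite F"
  shows "infsum (\<lambda>j. if j \<in> F then g j else 0) UNIV = sum g F"
proof -
  have "infsum (\<lambda>j. if j \<in> F then g j else 0) UNIV = infsum g F"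
    by (rule infsum_cong_neutral) auto
  then show ?thesis
    using assms by simp
qed

lemma has_sum_if_eq: "((\<lambda>k. if k = i then c else 0) has_sum c) UNIV"
  using has_sum_cong_neutral[of UNIV "{i}" "\<lambda>k. if k = i then c else 0" "\<lambda>_. c" c]
    has_sum_finite[of "{i}" "\<lambda>_. c"] by simp

lemma infsum_Pair_slice:
  fixes g :: "'u \<Rightarrow> 'b::{comm_monoid_add,t2_space}"
  shows "infsum (\<lambda>(l, i). if l = l0 then g i else 0) UNIV = infsum g UNIV"
proof -
  have "infsum (\<lambda>(l, i). if l = l0 then g i else 0) UNIV = infsum (\<lambda>z. g (snd z)) (range (Pair l0))"
    by (rule infsum_cong_neutral) auto
  also have "\<dots> = infsum g UNIV"
    by (subst infsum_reindex) (auto simp: inj_on_def o_def)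
  finally show ?thesis .
qed

lemma summable_on_Pair_slice:
  fixes g :: "'u \<Rightarrow> 'b::{comm_monoid_add,topological_space}"
  assumes "g summable_on UNIV"
  shows "(\<lambda>(l, i). if l = l0 then g i else 0) summable_on UNIV"
proof -
  have "(\<lambda>z. g (snd z)) summable_on (range (Pair l0))"
    using assms by (subst summable_on_reindex) (auto simp: inj_on_def o_def)
  then show ?thesis
    by (rule summable_on_cong_neutral[THEN iffD1, rotated -1]) auto
qed

lemma le_square_if_le_sqrt_mult:
  fixes S X :: real
  assumes "0 \<le> S" "0 \<le> X" "S \<le> sqrt S * X"
  shows "S \<le> X\<^sup>2"
proof (cases "S = 0")
  case False
  have "sqrt S * sqrt S \<le> sqrt S * X"
    using assms(1,3) by simp
  moreover have "0 < sqrt S"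
    using False assms(1) by simp
  ultimately have "sqrt S \<le> X"
    by (simp only: mult_le_cancel_left_pos)
  then have "(sqrt S)\<^sup>2 \<le> X\<^sup>2"
    by (rule power_mono) (simp add: assms(1))
  then show ?thesis
    using assms(1) by simp
qed simp

lemma Cauchy_Schwarz_infsum:
  fixes a b :: "'i \<Rightarrow> real"
  assumes a2: "(\<lambda>i. (a i)\<^sup>2) summable_on A" and b2: "(\<lambda>i. (b i)\<^sup>2) summable_on A"
  shows "(\<lambda>i. \<bar>a i * b i\<bar>) summable_on A"
    and "infsum (\<lambda>i. \<bar>a i * b i\<bar>) A \<le> sqrt (infsum (\<lambda>i. (a i)\<^sup>2) A) * sqrt (infsum (\<lambda>i. (b i)\<^sup>2) A)"
proof -
  show abs: "(\<lambda>i. \<bar>a i * b i\<bar>) summable_on A"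
  proof (rule summable_on_comparison_test)
    show "(\<lambda>i. ((a i)\<^sup>2 + (b i)\<^sup>2) / 2) summable_on A"
      using summable_on_cmult_left[OF summable_on_add[OF a2 b2], of "1/2"] by simp
    show "\<bar>a i * b i\<bar> \<le> ((a i)\<^sup>2 + (b i)\<^sup>2) / 2" for i
      using sum_squares_bound[of "\<bar>a i\<bar>" "\<bar>b i\<bar>"] by (simp add: abs_mult)
  qed simp
  show "infsum (\<lambda>i. \<bar>a i * b i\<bar>) A \<le> sqrt (infsum (\<lambda>i. (a i)\<^sup>2) A) * sqrt (infsum (\<lambda>i. (b i)\<^sup>2) A)"
  proof (rule infsum_le_finite_sums[OF abs])
    fix F assume F: "finite F" "F \<subseteq> A"
    have "(\<Sum>i\<in>F. \<bar>a i\<bar> * \<bar>b i\<bar>)\<^sup>2 \<le> (\<Sum>i\<in>F. (a i)\<^sup>2) * (\<Sum>i\<in>F. (b i)\<^sup>2)"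
      using Cauchy_Schwarz_ineq_sum[of "\<lambda>i. \<bar>a i\<bar>" "\<lambda>i. \<bar>b i\<bar>" F] by simp
    then have "(\<Sum>i\<in>F. \<bar>a i\<bar> * \<bar>b i\<bar>) \<le> sqrt (\<Sum>i\<in>F. (a i)\<^sup>2) * sqrt (\<Sum>i\<in>F. (b i)\<^sup>2)"
      by (subst real_sqrt_mult[symmetric], rule real_le_rsqrt)
    also have "\<dots> \<le> sqrt (infsum (\<lambda>i. (a i)\<^sup>2) A) * sqrt (infsum (\<lambda>i. (b i)\<^sup>2) A)"
      by (intro mult_mono real_sqrt_le_mono finite_sum_le_infsum a2 b2 F) (auto intro!: infsum_nonneg sum_nonneg)
    finally show "(\<Sum>i\<in>F. \<bar>a i * b i\<bar>) \<le> sqrt (infsum (\<lambda>i. (a i)\<^sup>2) A) * sqrt (infsum (\<lambda>i. (b i)\<^sup>2) A)"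
      by (simp add: abs_mult)
  qed
qed

lemma summable_on_mult_real:
  fixes a b :: "'i \<Rightarrow> real"
  shows "(\<lambda>i. (a i)\<^sup>2) summable_on A \<Longrightarrow> (\<lambda>i. (b i)\<^sup>2) summable_on A \<Longrightarrow> (\<lambda>i. a i * b i) summable_on A"
  using Cauchy_Schwarz_infsum(1) summable_on_iff_abs_summable_on_real by (fastforce simp: abs_mult)

lemma Cauchy_Schwarz_infsum_complex:
  fixes f g :: "'i \<Rightarrow> complex"
  assumes f2: "(\<lambda>i. (cmod (f i))\<^sup>2) summable_on A" and g2: "(\<lambda>i. (cmod (g i))\<^sup>2) summable_on A"
  shows "(\<lambda>i. f i * g i) summable_on A"
    and "cmod (infsum (\<lambda>i. f i * g i) A) \<le> sqrt (infsum (\<lambda>i. (cmod (f i))\<^sup>2) A) * sqrt (infsum (\<lambda>i. (cmod (g i))\<^sup>2) A)"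
proof -
  note CS = Cauchy_Schwarz_infsum[of "\<lambda>i. cmod (f i)" A "\<lambda>i. cmod (g i)", OF f2 g2]
  have abs: "(\<lambda>i. cmod (f i * g i)) summable_on A"
    using CS(1) by (simp add: norm_mult)
  then show "(\<lambda>i. f i * g i) summable_on A"
    using summable_on_iff_abs_summable_on_complex by blast
  have "cmod (infsum (\<lambda>i. f i * g i) A) \<le> infsum (\<lambda>i. cmod (f i * g i)) A"
    using abs by (rule norm_infsum_bound)
  also have "\<dots> \<le> sqrt (infsum (\<lambda>i. (cmod (f i))\<^sup>2) A) * sqrt (infsum (\<lambda>i. (cmod (g i))\<^sup>2) A)"
    using CS(2) by (simp add: norm_mult)
  finally show "cmod (infsum (\<lambda>i. f i * g i) A) \<le> sqrt (infsum (\<lambda>i. (cmod (f i))\<^sup>2) A) * sqrt (infsum (\<lambda>i. (cmod (g i))\<^sup>2) A)" .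
qed

lemma l2_summable: "l2 I f \<Longrightarrow> (\<lambda>i. (cmod (f i))\<^sup>2) summable_on UNIV"
  by (simp add: l2_def)

lemma l2_vanishes: "l2 I f \<Longrightarrow> i \<notin> I \<Longrightarrow> f i = 0"
  by (simp add: l2_def)

lemma vnorm_nonneg: "0 \<le> vnorm f"
  by (simp add: vnorm_def infsum_nonneg)

lemma power2_vnorm: "(vnorm f)\<^sup>2 = infsum (\<lambda>i. (cmod (f i))\<^sup>2) UNIV"
  by (simp add: vnorm_def infsum_nonneg)

lemma has_sum_power2_vnorm: "l2 I f \<Longrightarrow> ((\<lambda>i. (cmod (f i))\<^sup>2) has_sum (vnorm f)\<^sup>2) UNIV"
  unfolding power2_vnorm by (rule has_sum_infsum[OF l2_summable])

lemma vnorm_zero [simp]: "vnorm (\<lambda>_. 0) = 0"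
  by (simp add: vnorm_def)

lemma norm_le_vnorm: "l2 I f \<Longrightarrow> cmod (f p) \<le> vnorm f"
  unfolding vnorm_def
  by (rule real_le_rsqrt, rule finite_sum_le_infsum[of _ _ "{p}", simplified]) (auto dest: l2_summable)

lemma vnorm_eq_0_imp:
  assumes "l2 I f" "vnorm f = 0"
  shows "f = (\<lambda>_. 0)"
proof
  fix i
  show "f i = 0"
    using norm_le_vnorm[OF assms(1), of i] assms(2) by simp
qed

lemma l2_zero [simp]: "l2 I (\<lambda>_. 0)"
  by (simp add: l2_def)

lemma l2_cnj: "l2 I g \<Longrightarrow> l2 I (\<lambda>i. cnj (g i))"
  by (simp add: l2_def)

lemma l2_mult: "l2 I f \<Longrightarrow> l2 I (\<lambda>i. c * f i)"
  unfolding l2_def by (auto simp: norm_mult power_mult_distrib intro: summable_on_cmult_right)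

lemma l2_add:
  assumes "l2 I f" "l2 I g"
  shows "l2 I (\<lambda>i. f i + g i)"
proof -
  have "(\<lambda>i. (cmod (f i + g i))\<^sup>2) summable_on UNIV"
  proof (rule summable_on_comparison_test)
    show "(\<lambda>i. 2 * (cmod (f i))\<^sup>2 + 2 * (cmod (g i))\<^sup>2) summable_on UNIV"
      by (intro summable_on_add summable_on_cmult_right l2_summable[OF assms(1)] l2_summable[OF assms(2)])
    show "(cmod (f i + g i))\<^sup>2 \<le> 2 * (cmod (f i))\<^sup>2 + 2 * (cmod (g i))\<^sup>2" for i
    proof -
      have "(cmod (f i + g i))\<^sup>2 \<le> (cmod (f i) + cmod (g i))\<^sup>2"
        by (simp add: power_mono norm_triangle_ineq)
      also have "\<dots> \<le> 2 * (cmod (f i))\<^sup>2 + 2 * (cmod (g i))\<^sup>2"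
        using sum_squares_bound[of "cmod (f i)" "cmod (g i)"] by (simp add: power2_sum)
      finally show ?thesis .
    qed
  qed simp
  then show ?thesis
    using assms by (simp add: l2_def)
qed

lemma l2_diff: "l2 I f \<Longrightarrow> l2 I g \<Longrightarrow> l2 I (\<lambda>i. f i - g i)"
  using l2_add[of I f "\<lambda>i. - g i"] l2_mult[of I g "-1"] by simp

lemma l2_sum: "finite S \<Longrightarrow> (\<And>n. n \<in> S \<Longrightarrow> l2 I (F n)) \<Longrightarrow> l2 I (\<lambda>i. \<Sum>n\<in>S. F n i)"
  by (induction S rule: finite_induct) (simp_all add: l2_add)

lemma l2_restrict: "l2 I f \<Longrightarrow> l2 I (\<lambda>i. if i \<in> F then f i else 0)"
  unfolding l2_def by (auto intro: summable_on_comparison_test[of "\<lambda>i. (cmod (f i))\<^sup>2"])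

lemma l2_slice:
  fixes f :: "'x \<times> 'r \<Rightarrow> complex"
  assumes "l2 UNIV f"
  shows "l2 UNIV (\<lambda>r. f (x, r))"
  using summable_on_SigmaD1[of "\<lambda>x r. (cmod (f (x, r)))\<^sup>2" UNIV "\<lambda>_. UNIV" x] l2_summable[OF assms]
  unfolding l2_def by (simp add: case_prod_unfold)

lemma summable_on_l2_mult: "l2 I f \<Longrightarrow> l2 J g \<Longrightarrow> (\<lambda>i. f i * g i) summable_on UNIV"
  by (rule Cauchy_Schwarz_infsum_complex(1)[OF l2_summable l2_summable])

lemma vinner_summable: "l2 I f \<Longrightarrow> l2 J g \<Longrightarrow> (\<lambda>i. f i * cnj (g i)) summable_on UNIV"
  by (rule summable_on_l2_mult[OF _ l2_cnj])

lemma norm_vinner_le: "l2 I f \<Longrightarrow> l2 J g \<Longrightarrow> cmod (vinner f g) \<le> vnorm f * vnorm g"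
  using Cauchy_Schwarz_infsum_complex(2)[OF l2_summable l2_summable[OF l2_cnj]]
  unfolding vinner_def vnorm_def by simp

lemma vinner_self:
  assumes "l2 I f"
  shows "vinner f f = complex_of_real ((vnorm f)\<^sup>2)"
proof -
  have "vinner f f = infsum (\<lambda>i. complex_of_real ((cmod (f i))\<^sup>2)) UNIV"
    unfolding vinner_def by (simp only: complex_norm_square)
  also have "\<dots> = complex_of_real ((vnorm f)\<^sup>2)"
    by (rule infsumI, rule has_sum_of_real, rule has_sum_power2_vnorm[OF assms])
  finally show ?thesis .
qed

lemma vinner_commute: "vinner g f = cnj (vinner f g)"
  unfolding vinner_def infsum_cnj[symmetric] by (simp add: mult.commute)

lemma vinner_zero_right [simp]: "vinner g (\<lambda>_. 0) = 0"
  by (simp add: vinner_def)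

lemma vinner_mult_left: "vinner (\<lambda>i. c * f i) h = c * vinner f h"
  unfolding vinner_def by (simp add: infsum_cmult_right' mult.assoc)

lemma vinner_diff_left:
  "l2 I f \<Longrightarrow> l2 I g \<Longrightarrow> l2 J h \<Longrightarrow> vinner (\<lambda>i. f i - g i) h = vinner f h - vinner g h"
  unfolding vinner_def by (simp add: left_diff_distrib infsum_diff vinner_summable)

lemma vinner_sum_left:
  assumes "finite S" "\<And>n. n \<in> S \<Longrightarrow> l2 I (F n)" "l2 J h"
  shows "vinner (\<lambda>i. \<Sum>n\<in>S. F n i) h = (\<Sum>n\<in>S. vinner (F n) h)"
  unfolding vinner_def sum_distrib_right using assms by (intro infsum_sum) (auto intro: vinner_summable)

lemma vnorm_mult: "vnorm (\<lambda>i. c * f i) = cmod c * vnorm f"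
  unfolding vnorm_def
  by (simp add: norm_mult power_mult_distrib infsum_cmult_right' real_sqrt_mult)

lemma l2_normalize:
  assumes "l2 I w" "vnorm w \<noteq> 0"
  obtains u where "l2 I u" "vnorm u = 1" "w = (\<lambda>i. complex_of_real (vnorm w) * u i)"
proof
  show "l2 I (\<lambda>i. complex_of_real (1 / vnorm w) * w i)"
    by (rule l2_mult[OF assms(1)])
  show "vnorm (\<lambda>i. complex_of_real (1 / vnorm w) * w i) = 1"
    using assms(2) vnorm_nonneg[of w] by (subst vnorm_mult) (simp add: norm_divide)
  show "w = (\<lambda>i. complex_of_real (vnorm w) * (complex_of_real (1 / vnorm w) * w i))"
    using assms(2) by (simp add: mult.assoc[symmetric] flip: of_real_mult)
qed

section \<open>Bounded operators and adjoints\<close>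

definition evec :: "'j \<Rightarrow> 'j \<Rightarrow> complex" where
  "evec j = (\<lambda>k. if k = j then 1 else 0)"

lemma l2_evec:
  assumes "j \<in> J"
  shows "l2 J (evec j)"
proof -
  have "(\<lambda>i. (cmod (evec j i))\<^sup>2) summable_on UNIV"
    by (rule summable_on_cong_neutral[where S="{j}", THEN iffD1]) (auto simp: evec_def)
  then show ?thesis
    using assms unfolding l2_def evec_def by auto
qed

lemma vnorm_evec: "vnorm (evec j) = 1"
proof -
  have "infsum (\<lambda>i. (cmod (evec j i))\<^sup>2) UNIV = infsum (\<lambda>i. 1::real) {j}"
    by (rule infsum_cong_neutral) (auto simp: evec_def)
  then show ?thesis
    unfolding vnorm_def by simp
qed

lemma bop_vanishes: "bop J I M \<Longrightarrow> i \<notin> I \<or> j \<notin> J \<Longrightarrow> M i j = 0"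
  unfolding bop_def by blast

lemma bopE:
  assumes "bop J I M"
  obtains C where "0 \<le> C"
    and "\<And>f. l2 J f \<Longrightarrow> (\<forall>i. (\<lambda>j. M i j * f j) summable_on UNIV) \<and>
      l2 I (mapply M f) \<and> vnorm (mapply M f) \<le> C * vnorm f"
proof -
  from assms obtain C where C: "\<And>f. l2 J f \<Longrightarrow> (\<forall>i. (\<lambda>j. M i j * f j) summable_on UNIV) \<and>
      l2 I (mapply M f) \<and> vnorm (mapply M f) \<le> C * vnorm f"
    unfolding bop_def by blast
  have "C * vnorm f \<le> max C 0 * vnorm f" for f
    by (intro mult_right_mono vnorm_nonneg) auto
  with C show ?thesis
    by (intro that[of "max C 0"]) (auto intro: order_trans)
qed

lemma l2_mapply: "bop J I M \<Longrightarrow> l2 J f \<Longrightarrow> l2 I (mapply M f)"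
  by (metis bopE)

lemma summable_on_bop_row: "bop J I M \<Longrightarrow> l2 J f \<Longrightarrow> (\<lambda>j. M i j * f j) summable_on UNIV"
  by (metis bopE)

lemma mapply_zero [simp]: "mapply M (\<lambda>_. 0) = (\<lambda>_. 0)"
  by (simp add: mapply_def)

lemma mapply_mult: "mapply M (\<lambda>i. c * f i) = (\<lambda>j. c * mapply M f j)"
  unfolding mapply_def by (simp add: infsum_cmult_right' mult_ac)

lemma mapply_diff:
  assumes "bop J I M" "l2 J f" "l2 J g"
  shows "mapply M (\<lambda>j. f j - g j) = (\<lambda>i. mapply M f i - mapply M g i)"
  unfolding mapply_def
  by (simp add: right_diff_distrib infsum_diff summable_on_bop_row[OF assms(1)] assms(2,3))

lemma mapply_finite_support:
  assumes "finite F"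
  shows "mapply M (\<lambda>j. if j \<in> F then v j else 0) = (\<lambda>i. \<Sum>j\<in>F. v j * M i j)"
proof
  fix i
  have "mapply M (\<lambda>j. if j \<in> F then v j else 0) i = infsum (\<lambda>j. if j \<in> F then v j * M i j else 0) UNIV"
    unfolding mapply_def by (rule infsum_cong) simp
  then show "mapply M (\<lambda>j. if j \<in> F then v j else 0) i = (\<Sum>j\<in>F. v j * M i j)"
    by (simp add: infsum_if_in_finite[OF assms])
qed

lemma mapply_evec: "mapply M (evec j) = (\<lambda>i. M i j)"
  using mapply_finite_support[of "{j}" M "\<lambda>_. 1"] unfolding evec_def by (simp cong: if_cong)

lemma bop_columnE:
  assumes "bop J I M"
  obtains C where "0 \<le> C" "\<And>j. l2 I (\<lambda>i. M i j) \<and> vnorm (\<lambda>i. M i j) \<le> C"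
proof -
  obtain C where C: "0 \<le> C" "\<And>f. l2 J f \<Longrightarrow> l2 I (mapply M f) \<and> vnorm (mapply M f) \<le> C * vnorm f"
    using bopE[OF assms] by metis
  have "l2 I (\<lambda>i. M i j) \<and> vnorm (\<lambda>i. M i j) \<le> C" for j
  proof (cases "j \<in> J")
    case True
    then show ?thesis
      using C(2)[OF l2_evec[OF True]] by (simp add: mapply_evec vnorm_evec)
  next
    case False
    then have "(\<lambda>i. M i j) = (\<lambda>_. 0)"
      using bop_vanishes[OF assms] by auto
    then show ?thesis
      using C(1) by simp
  qed
  with C(1) show ?thesis
    by (rule that)
qed

lemma l2_bop_column: "bop J I M \<Longrightarrow> l2 I (\<lambda>i. M i j)"
  by (metis bop_columnE)

lemma vnorm_tail_tendsto:
  assumes "l2 J v"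
  shows "((\<lambda>F. vnorm (\<lambda>j. if j \<in> F then 0 else v j)) \<longlongrightarrow> 0) (finite_subsets_at_top UNIV)"
proof -
  let ?g = "\<lambda>j. (cmod (v j))\<^sup>2"
  have ev: "eventually (\<lambda>F. vnorm (\<lambda>j. if j \<in> F then 0 else v j) = sqrt ((vnorm v)\<^sup>2 - sum ?g F))
      (finite_subsets_at_top UNIV)"
  proof (rule eventually_finite_subsets_at_top_weakI)
    fix F :: "'a set"
    assume F: "finite F"
    have "infsum (\<lambda>j. (cmod (if j \<in> F then 0 else v j))\<^sup>2) UNIV
        = infsum (\<lambda>j. ?g j - (if j \<in> F then ?g j else 0)) UNIV"
      by (rule infsum_cong) auto
    also have "\<dots> = (vnorm v)\<^sup>2 - sum ?g F"
      unfolding power2_vnorm infsum_if_in_finite[OF F, symmetric]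
      by (rule infsum_diff[OF l2_summable[OF assms]])
        (rule summable_on_cong_neutral[where S=F, THEN iffD1], use F in auto)
    finally show "vnorm (\<lambda>j. if j \<in> F then 0 else v j) = sqrt ((vnorm v)\<^sup>2 - sum ?g F)"
      unfolding vnorm_def by simp
  qed
  have "((\<lambda>F. sqrt ((vnorm v)\<^sup>2 - sum ?g F)) \<longlongrightarrow> 0) (finite_subsets_at_top UNIV)"
    using tendsto_real_sqrt[OF tendsto_diff[OF tendsto_const has_sum_power2_vnorm[OF assms, unfolded has_sum_def]],
        of "(vnorm v)\<^sup>2"]
    by simp
  then show ?thesis
    using tendsto_cong[OF ev] by simp
qed

lemma vinner_mapply_sum:
  assumes A: "bop J I A" and w: "l2 K w" and F: "finite F"
  shows "(\<Sum>j\<in>F. v j * vinner (\<lambda>i. A i j) w) = vinner (mapply A (\<lambda>j. if j \<in> F then v j else 0)) w"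
  unfolding mapply_finite_support[OF F]
  by (simp add: vinner_sum_left[OF F l2_mult[OF l2_bop_column[OF A]] w] vinner_mult_left)

lemma norm_vinner_mapply_tail_le:
  assumes A: "bop J I A" and C: "\<And>f. l2 J f \<Longrightarrow> vnorm (mapply A f) \<le> C * vnorm f" "0 \<le> C"
    and v: "l2 J v" and w: "l2 K w"
  shows "cmod (vinner (mapply A (\<lambda>j. if j \<in> F then v j else 0)) w - vinner (mapply A v) w)
    \<le> C * vnorm (\<lambda>j. if j \<in> F then 0 else v j) * vnorm w"
proof -
  let ?head = "\<lambda>j. if j \<in> F then v j else 0" and ?tail = "\<lambda>j. if j \<in> F then 0 else v j"
  have head: "l2 J ?head"
    by (rule l2_restrict[OF v])
  have "?tail = (\<lambda>j. if j \<in> - F then v j else 0)"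
    by (simp add: fun_eq_iff)
  then have tail: "l2 J ?tail"
    using l2_restrict[OF v, of "- F"] by (simp only:)
  have "?tail = (\<lambda>j. v j - ?head j)"
    by (simp add: fun_eq_iff)
  then have "vinner (mapply A v) w - vinner (mapply A ?head) w = vinner (mapply A ?tail) w"
    by (simp only: mapply_diff[OF A v head] vinner_diff_left[OF l2_mapply[OF A v] l2_mapply[OF A head] w])
  then have "cmod (vinner (mapply A ?head) w - vinner (mapply A v) w) = cmod (vinner (mapply A ?tail) w)"
    by (metis minus_diff_eq norm_minus_cancel)
  also have "\<dots> \<le> vnorm (mapply A ?tail) * vnorm w"
    by (rule norm_vinner_le[OF l2_mapply[OF A tail] w])
  also have "\<dots> \<le> C * vnorm ?tail * vnorm w"
    using C(1)[OF tail] by (intro mult_right_mono vnorm_nonneg)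
  finally show ?thesis .
qed

lemma has_sum_vinner_mapply:
  assumes A: "bop J I A" and v: "l2 J v" and w: "l2 K w"
  shows "((\<lambda>j. v j * vinner (\<lambda>i. A i j) w) has_sum vinner (mapply A v) w) UNIV"
proof -
  obtain C where C: "0 \<le> C" "\<And>f. l2 J f \<Longrightarrow> l2 I (mapply A f) \<and> vnorm (mapply A f) \<le> C * vnorm f"
    using bopE[OF A] by metis
  let ?head = "\<lambda>F j. if j \<in> F then v j else 0"
  have tail: "((\<lambda>F. C * vnorm (\<lambda>j. if j \<in> F then 0 else v j) * vnorm w) \<longlongrightarrow> 0) (finite_subsets_at_top UNIV)"
    using tendsto_mult_right[OF tendsto_mult_left[OF vnorm_tail_tendsto[OF v], of C], of "vnorm w"] by simp
  have bound: "cmod (vinner (mapply A (?head F)) w - vinner (mapply A v) w)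
      \<le> C * vnorm (\<lambda>j. if j \<in> F then 0 else v j) * vnorm w" for F
    using C(2) by (intro norm_vinner_mapply_tail_le[OF A _ C(1) v w]) blast
  have "((\<lambda>F. vinner (mapply A (?head F)) w - vinner (mapply A v) w) \<longlongrightarrow> 0) (finite_subsets_at_top UNIV)"
    using tail by (rule Lim_null_comparison[OF always_eventually, rotated]) (intro allI bound)
  then have "((\<lambda>F. vinner (mapply A (?head F)) w) \<longlongrightarrow> vinner (mapply A v) w) (finite_subsets_at_top UNIV)"
    using Lim_null by blast
  moreover have "eventually (\<lambda>F. (\<Sum>j\<in>F. v j * vinner (\<lambda>i. A i j) w) = vinner (mapply A (?head F)) w)
      (finite_subsets_at_top UNIV)"
    by (intro eventually_finite_subsets_at_top_weakI vinner_mapply_sum[OF A w])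
  ultimately show ?thesis
    unfolding has_sum_def by (simp add: tendsto_cong)
qed

lemma mapply_adj: "mapply (adj A) g = (\<lambda>j. vinner g (\<lambda>i. A i j))"
  unfolding mapply_def adj_def vinner_def by (simp add: mult.commute)

lemma sum_norm_mapply_adj_le:
  assumes A: "bop J I A" and C: "\<And>f. l2 J f \<Longrightarrow> vnorm (mapply A f) \<le> C * vnorm f"
    and "0 \<le> C" and g: "l2 K g" and F: "finite F"
  shows "(\<Sum>j\<in>F. (cmod (mapply (adj A) g j))\<^sup>2) \<le> (C * vnorm g)\<^sup>2"
proof -
  let ?a = "mapply (adj A) g"
  define S where "S = (\<Sum>j\<in>F. (cmod (?a j))\<^sup>2)"
  define c where "c = (\<lambda>j. if j \<in> F then ?a j else 0)"
  have "c j = 0" if "j \<notin> J" for j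
    using bop_vanishes[OF A] that by (simp add: c_def mapply_adj vinner_def)
  moreover have "(\<lambda>j. (cmod (c j))\<^sup>2) summable_on UNIV"
    unfolding c_def by (rule summable_on_cong_neutral[where S=F, THEN iffD1]) (use F in auto)
  ultimately have c: "l2 J c"
    by (simp add: l2_def)
  have S0: "0 \<le> S"
    unfolding S_def by (simp add: sum_nonneg)
  have "(\<lambda>j. (cmod (c j))\<^sup>2) = (\<lambda>j. if j \<in> F then (cmod (?a j))\<^sup>2 else 0)"
    by (simp add: c_def fun_eq_iff)
  then have c_norm: "vnorm c = sqrt S"
    unfolding vnorm_def S_def by (simp add: infsum_if_in_finite[OF F])
  have "vinner (mapply A c) g = (\<Sum>j\<in>F. ?a j * vinner (\<lambda>i. A i j) g)"
    unfolding c_def by (rule vinner_mapply_sum[OF A g F, symmetric])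
  also have "\<dots> = complex_of_real S"
    unfolding S_def of_real_sum
    by (rule sum.cong) (simp_all only: complex_norm_square mapply_adj vinner_commute[of "\<lambda>i. A i _" g])
  finally have "S = cmod (vinner (mapply A c) g)"
    using S0 by simp
  also have "\<dots> \<le> vnorm (mapply A c) * vnorm g"
    by (rule norm_vinner_le[OF l2_mapply[OF A c] g])
  also have "\<dots> \<le> C * sqrt S * vnorm g"
    using C[OF c] c_norm by (intro mult_right_mono vnorm_nonneg) auto
  finally have "S \<le> sqrt S * (C * vnorm g)"
    by (simp add: mult_ac)
  with S0 show ?thesis
    unfolding S_def using \<open>0 \<le> C\<close> vnorm_nonneg[of g] by (intro le_square_if_le_sqrt_mult) auto
qed

lemma bop_adj:
  assumes A: "bop J I A"
  shows "bop I J (adj A)"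
proof -
  obtain C where C: "0 \<le> C" "\<And>f. l2 J f \<Longrightarrow> vnorm (mapply A f) \<le> C * vnorm f"
    using bopE[OF A] by metis
  have bound: "\<forall>g. l2 I g \<longrightarrow> (\<forall>j. (\<lambda>i. adj A j i * g i) summable_on UNIV) \<and> l2 J (mapply (adj A) g) \<and>
      vnorm (mapply (adj A) g) \<le> C * vnorm g"
  proof (intro allI impI conjI)
    fix g
    assume g: "l2 I g"
    let ?a = "mapply (adj A) g"
    show "(\<lambda>i. adj A j i * g i) summable_on UNIV" for j
      unfolding adj_def by (rule summable_on_l2_mult[OF l2_cnj[OF l2_bop_column[OF A]] g])
    have bounded: "(\<Sum>j\<in>F. (cmod (?a j))\<^sup>2) \<le> (C * vnorm g)\<^sup>2" if "finite F" for F
      by (rule sum_norm_mapply_adj_le[OF A C(2) C(1) g that])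
    have summable: "(\<lambda>j. (cmod (?a j))\<^sup>2) summable_on UNIV"
      by (rule nonneg_bounded_partial_sums_imp_summable_on[where C="(C * vnorm g)\<^sup>2"])
        (auto intro!: eventually_finite_subsets_at_top_weakI bounded)
    moreover have "?a j = 0" if "j \<notin> J" for j
      using bop_vanishes[OF A] that by (simp add: mapply_adj vinner_def)
    ultimately show "l2 J ?a"
      by (simp add: l2_def)
    have "(vnorm ?a)\<^sup>2 \<le> (C * vnorm g)\<^sup>2"
      unfolding power2_vnorm by (rule infsum_le_finite_sums[OF summable bounded])
    then show "vnorm ?a \<le> C * vnorm g"
      using C(1) vnorm_nonneg[of g] by (simp add: power2_le_iff_abs_le)
  qed
  have vanishes: "\<forall>j i. j \<notin> J \<or> i \<notin> I \<longrightarrow> adj A j i = 0"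
    using bop_vanishes[OF A] by (auto simp: adj_def)
  show ?thesis
    unfolding bop_def using vanishes bound by (intro conjI exI[of _ C])
qed

lemma vinner_mapply_adj:
  assumes A: "bop J I A" and v: "l2 J v" and g: "l2 I g"
  shows "vinner (mapply (adj A) g) v = vinner g (mapply A v)"
proof -
  have "((\<lambda>j. cnj (v j * vinner (\<lambda>i. A i j) g)) has_sum cnj (vinner (mapply A v) g)) UNIV"
    using has_sum_vinner_mapply[OF A v g] by (rule has_sum_cnj_iff[THEN iffD2])
  then have "((\<lambda>j. mapply (adj A) g j * cnj (v j)) has_sum vinner g (mapply A v)) UNIV"
    by (simp add: mapply_adj vinner_commute[of g "\<lambda>i. A i _"] vinner_commute[of g "mapply A v"] mult.commute)
  then show ?thesis
    unfolding vinner_def by (rule infsumI)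
qed

lemma has_sum_mmul_row:
  assumes B: "bop J I B" and A: "bop I K A" and f: "l2 J f"
  shows "((\<lambda>j. mmul A B k j * f j) has_sum mapply A (mapply B f) k) UNIV"
proof -
  let ?w = "\<lambda>i. cnj (A k i)"
  have w: "l2 I ?w"
    using l2_bop_column[OF bop_adj[OF A], of k] by (simp add: adj_def)
  have "vinner (\<lambda>i. B i j) ?w = mmul A B k j" for j
    unfolding vinner_def mmul_def by (simp add: mult.commute)
  moreover have "vinner (mapply B f) ?w = mapply A (mapply B f) k"
    unfolding vinner_def mapply_def[of A] by (simp add: mult.commute)
  ultimately show ?thesis
    using has_sum_vinner_mapply[OF B f w] by (simp add: mult.commute)
qed

lemma mapply_mmul:
  assumes "bop J I B" "bop I K A" "l2 J f"
  shows "mapply (mmul A B) f = mapply A (mapply B f)"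
proof
  fix k
  show "mapply (mmul A B) f k = mapply A (mapply B f) k"
    unfolding mapply_def[of "mmul A B"] by (rule infsumI[OF has_sum_mmul_row[OF assms]])
qed

lemma bop_mmul:
  assumes B: "bop J I B" and A: "bop I K A"
  shows "bop J K (mmul A B)"
proof -
  obtain CA where CA: "0 \<le> CA" "\<And>f. l2 I f \<Longrightarrow> l2 K (mapply A f) \<and> vnorm (mapply A f) \<le> CA * vnorm f"
    using bopE[OF A] by metis
  obtain CB where CB: "0 \<le> CB" "\<And>f. l2 J f \<Longrightarrow> l2 I (mapply B f) \<and> vnorm (mapply B f) \<le> CB * vnorm f"
    using bopE[OF B] by metis
  have bound: "\<forall>f. l2 J f \<longrightarrow> (\<forall>k. (\<lambda>j. mmul A B k j * f j) summable_on UNIV) \<and> l2 K (mapply (mmul A B) f) \<and>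
      vnorm (mapply (mmul A B) f) \<le> (CA * CB) * vnorm f"
  proof (intro allI impI conjI)
    fix f
    assume f: "l2 J f"
    show "(\<lambda>j. mmul A B k j * f j) summable_on UNIV" for k
      using has_sum_mmul_row[OF B A f] by (rule has_sum_imp_summable)
    show "l2 K (mapply (mmul A B) f)"
      using CA(2) CB(2)[OF f] by (simp add: mapply_mmul[OF B A f])
    have "vnorm (mapply A (mapply B f)) \<le> CA * vnorm (mapply B f)"
      using CA(2) CB(2)[OF f] by blast
    also have "\<dots> \<le> CA * (CB * vnorm f)"
      using CA(1) CB(2)[OF f] by (intro mult_left_mono) auto
    finally have "vnorm (mapply A (mapply B f)) \<le> CA * (CB * vnorm f)" .
    then show "vnorm (mapply (mmul A B) f) \<le> (CA * CB) * vnorm f"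
      by (simp add: mapply_mmul[OF B A f] mult.assoc)
  qed
  have vanishes: "\<forall>k j. k \<notin> K \<or> j \<notin> J \<longrightarrow> mmul A B k j = 0"
  proof (intro allI impI)
    fix k j
    assume "k \<notin> K \<or> j \<notin> J"
    have "(\<lambda>i. A k i * B i j) = (\<lambda>_. 0)"
      using bop_vanishes[OF A, of k] bop_vanishes[OF B, of _ j] \<open>k \<notin> K \<or> j \<notin> J\<close> by auto
    then show "mmul A B k j = 0"
      by (simp add: mmul_def)
  qed
  show ?thesis
    unfolding bop_def using vanishes bound by (intro conjI exI[of _ "CA * CB"])
qed

lemma vinner_mapply_mmul_adj:
  assumes A: "bop I J A" and B: "bop I J B" and v: "l2 I v"
  shows "vinner (mapply (mmul (adj A) B) v) v = vinner (mapply B v) (mapply A v)"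
  by (simp add: mapply_mmul[OF B bop_adj[OF A] v] vinner_mapply_adj[OF A v l2_mapply[OF B v]])

section \<open>The spectral decomposition of P\<close>

locale spectral_setting =
  fixes \<xi> :: "'x::finite \<times> 'r \<Rightarrow> complex" and P :: "'a::finite \<times> 'r \<Rightarrow> 'a \<times> 'r \<Rightarrow> complex"
    and Nidx :: "nat set" and lam :: "nat \<Rightarrow> real" and \<gamma> :: "nat \<Rightarrow> 'a \<times> 'r \<Rightarrow> complex"
  assumes l2_\<xi>: "l2 UNIV \<xi>" and vnorm_\<xi>: "vnorm \<xi> = 1" and bop_P: "bop UNIV UNIV P"
    and positive_P: "positive_op P" and spectral: "spectral_decomp P Nidx lam \<gamma>"
begin

lemma l2_\<gamma>: "l2 UNIV (\<gamma> n)"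
  using spectral unfolding spectral_decomp_def by (cases "n \<in> Nidx") auto

lemma vinner_\<gamma>_self: "n \<in> Nidx \<Longrightarrow> vinner (\<gamma> n) (\<gamma> n) = 1"
  using spectral vinner_self[OF l2_\<gamma>] unfolding spectral_decomp_def by auto

lemma vinner_\<gamma>_orthogonal: "m \<in> Nidx \<Longrightarrow> n \<in> Nidx \<Longrightarrow> m \<noteq> n \<Longrightarrow> vinner (\<gamma> m) (\<gamma> n) = 0"
  using spectral unfolding spectral_decomp_def by auto

lemma lam_outside: "n \<notin> Nidx \<Longrightarrow> lam n = 0"
  using spectral unfolding spectral_decomp_def by auto

definition spectral_sum :: "nat \<Rightarrow> ('a \<times> 'r \<Rightarrow> complex) \<Rightarrow> 'a \<times> 'r \<Rightarrow> complex" where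
  "spectral_sum N u = (\<lambda>i. \<Sum>n<N. complex_of_real (lam n) * vinner u (\<gamma> n) * \<gamma> n i)"

lemma l2_spectral_sum: "l2 UNIV (spectral_sum N u)"
  unfolding spectral_sum_def by (rule l2_sum) (auto intro: l2_mult l2_\<gamma>)

lemma spectral_sum_tendsto:
  "l2 UNIV u \<Longrightarrow> (\<lambda>N. vnorm (\<lambda>i. mapply P u i - spectral_sum N u i)) \<longlonglongrightarrow> 0"
  using spectral unfolding spectral_decomp_def spectral_sum_def by auto

lemma spectral_sum_\<gamma>:
  assumes "m \<in> Nidx" "m < N"
  shows "spectral_sum N (\<gamma> m) = (\<lambda>i. complex_of_real (lam m) * \<gamma> m i)"
proof
  fix i
  have "complex_of_real (lam n) * vinner (\<gamma> m) (\<gamma> n) * \<gamma> n i = 0" if "n \<noteq> m" for n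
    using vinner_\<gamma>_orthogonal[OF assms(1), of n] lam_outside[of n] that by (cases "n \<in> Nidx") auto
  then show "spectral_sum N (\<gamma> m) i = complex_of_real (lam m) * \<gamma> m i"
    unfolding spectral_sum_def using assms
    by (simp add: sum.remove[of "{..<N}" m] sum.neutral vinner_\<gamma>_self)
qed

lemma mapply_P_\<gamma>:
  assumes "m \<in> Nidx"
  shows "mapply P (\<gamma> m) = (\<lambda>i. complex_of_real (lam m) * \<gamma> m i)"
proof -
  let ?d = "\<lambda>i. mapply P (\<gamma> m) i - complex_of_real (lam m) * \<gamma> m i"
  have "eventually (\<lambda>N. vnorm (\<lambda>i. mapply P (\<gamma> m) i - spectral_sum N (\<gamma> m) i) = vnorm ?d) sequentially"
    using eventually_gt_at_top[of m] by eventually_elim (simp add: spectral_sum_\<gamma>[OF assms])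
  then have "(\<lambda>N. vnorm ?d) \<longlonglongrightarrow> 0"
    using spectral_sum_tendsto[OF l2_\<gamma>, of m] by (simp only: tendsto_cong)
  then have "vnorm ?d = 0"
    by (simp add: LIMSEQ_const_iff)
  then have "?d = (\<lambda>_. 0)"
    by (rule vnorm_eq_0_imp[OF l2_diff[OF l2_mapply[OF bop_P l2_\<gamma>] l2_mult[OF l2_\<gamma>]]])
  then show ?thesis
    by (auto simp: fun_eq_iff)
qed

lemma lam_nonneg: "0 \<le> lam n"
proof (cases "n \<in> Nidx")
  case True
  then have "vinner (mapply P (\<gamma> n)) (\<gamma> n) = complex_of_real (lam n)"
    by (simp add: mapply_P_\<gamma> vinner_mult_left vinner_\<gamma>_self)
  then show ?thesis
    using positive_P l2_\<gamma>[of n] unfolding positive_op_def by force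
qed (simp add: lam_outside)

lemma has_sum_quadratic_form:
  assumes u: "l2 UNIV u"
  shows "((\<lambda>n. lam n * (cmod (vinner u (\<gamma> n)))\<^sup>2) has_sum Re (vinner (mapply P u) u)) UNIV"
proof -
  let ?t = "\<lambda>n. lam n * (cmod (vinner u (\<gamma> n)))\<^sup>2"
  have partial: "vinner (spectral_sum N u) u = complex_of_real (\<Sum>n<N. ?t n)" for N
  proof -
    have "vinner (spectral_sum N u) u = (\<Sum>n<N. complex_of_real (lam n) * vinner u (\<gamma> n) * vinner (\<gamma> n) u)"
      unfolding spectral_sum_def
      by (subst vinner_sum_left[OF _ _ u]) (auto intro: l2_mult l2_\<gamma> simp: vinner_mult_left)
    then show ?thesis
      by (simp add: vinner_commute[of "\<gamma> _" u] complex_norm_square[unfolded of_real_power] mult.assoc)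
  qed
  have bound: "cmod (vinner (spectral_sum N u) u - vinner (mapply P u) u)
      \<le> vnorm (\<lambda>i. mapply P u i - spectral_sum N u i) * vnorm u" for N
  proof -
    have "vinner (spectral_sum N u) u - vinner (mapply P u) u = - vinner (\<lambda>i. mapply P u i - spectral_sum N u i) u"
      using vinner_diff_left[OF l2_mapply[OF bop_P u] l2_spectral_sum u] by simp
    then show ?thesis
      using norm_vinner_le[OF l2_diff[OF l2_mapply[OF bop_P u] l2_spectral_sum] u] by simp
  qed
  have "(\<lambda>N. vnorm (\<lambda>i. mapply P u i - spectral_sum N u i) * vnorm u) \<longlonglongrightarrow> 0"
    using tendsto_mult_left_zero[OF spectral_sum_tendsto[OF u]] .
  then have "(\<lambda>N. vinner (spectral_sum N u) u - vinner (mapply P u) u) \<longlonglongrightarrow> 0"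
    by (rule Lim_null_comparison[OF always_eventually, rotated]) (intro allI bound)
  then have "(\<lambda>N. Re (vinner (spectral_sum N u) u)) \<longlonglongrightarrow> Re (vinner (mapply P u) u)"
    by (intro tendsto_Re) (simp only: LIM_zero_iff)
  then have "?t sums Re (vinner (mapply P u) u)"
    by (simp add: sums_def partial)
  then show ?thesis
    by (rule sums_nonneg_imp_has_sum) (simp add: lam_nonneg)
qed

lemma quadratic_form_boundE:
  obtains C where "\<And>u. l2 UNIV u \<Longrightarrow> Re (vinner (mapply P u) u) \<le> C * (vnorm u)\<^sup>2"
proof -
  obtain C where C: "\<And>f. l2 UNIV f \<Longrightarrow> l2 UNIV (mapply P f) \<and> vnorm (mapply P f) \<le> C * vnorm f"
    using bopE[OF bop_P] by metis
  have "Re (vinner (mapply P u) u) \<le> C * (vnorm u)\<^sup>2" if u: "l2 UNIV u" for u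
  proof -
    have "Re (vinner (mapply P u) u) \<le> vnorm (mapply P u) * vnorm u"
      using complex_Re_le_cmod norm_vinner_le[OF l2_mapply[OF bop_P u] u] by (rule order_trans)
    also have "\<dots> \<le> C * vnorm u * vnorm u"
      using C[OF u] by (intro mult_right_mono vnorm_nonneg) auto
    finally show ?thesis
      by (simp add: power2_eq_square mult_ac)
  qed
  then show ?thesis
    by (rule that)
qed

end

section \<open>Kraus vectors of a channel\<close>

lemma bop_block: "block_isometry I J U \<Longrightarrow> bop I J (U a x)"
  by (simp add: block_isometry_def)

lemma mapply_blockmat_tensor:
  fixes U :: "'a::finite \<Rightarrow> 'x::finite \<Rightarrow> 'u \<Rightarrow> 'v \<Rightarrow> complex"
  assumes U: "\<And>a x. bop I J (U a x)" and v: "l2 I v"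
  shows "mapply (blockmat U) (\<lambda>(x, i). c x * v i) (a, j) = (\<Sum>x\<in>UNIV. c x * mapply (U a x) v j)"
proof -
  have "mapply (blockmat U) (\<lambda>(x, i). c x * v i) (a, j) = infsum (\<lambda>(x, i). c x * (U a x j i * v i)) (UNIV \<times> UNIV)"
    unfolding mapply_def blockmat_def by (simp add: case_prod_unfold mult_ac)
  also have "\<dots> = (\<Sum>x\<in>UNIV. c x * mapply (U a x) v j)"
    by (subst infsum_Times_finite)
      (auto intro: summable_on_cmult_right summable_on_bop_row[OF U v] simp: infsum_cmult_right' mapply_def)
  finally show ?thesis .
qed

lemma l2_mapply_block_column:
  fixes U :: "'a::finite \<Rightarrow> 'x \<Rightarrow> 'u \<Rightarrow> 'v \<Rightarrow> complex"
  assumes U: "\<And>a. bop I J (U a x)" and v: "l2 I v"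
  shows "l2 UNIV (\<lambda>(a, j). mapply (U a x) v j)"
proof -
  have "(\<lambda>(a, j). (cmod (mapply (U a x) v j))\<^sup>2) summable_on UNIV \<times> UNIV"
    by (rule summable_on_Times_finite) (auto intro: l2_summable l2_mapply[OF U v])
  then show ?thesis
    unfolding l2_def by (simp add: case_prod_unfold)
qed

lemma has_sum_block_isometry_tensor:
  fixes U :: "'a::finite \<Rightarrow> 'x::finite \<Rightarrow> 'u \<Rightarrow> 'v \<Rightarrow> complex"
  assumes BI: "block_isometry I J U" and v: "l2 I v"
  shows "((\<lambda>(a, j). (cmod (\<Sum>x\<in>UNIV. c x * mapply (U a x) v j))\<^sup>2) has_sum
           (\<Sum>x\<in>UNIV. (cmod (c x))\<^sup>2) * (vnorm v)\<^sup>2) UNIV"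
proof -
  note U = bop_block[OF BI]
  define f where "f = (\<lambda>(x, i). c x * v i)"
  define w where "w = (\<lambda>(a, j). \<Sum>x\<in>UNIV. c x * mapply (U a x) v j)"
  have "((\<lambda>(x, i). (cmod (c x))\<^sup>2 * (cmod (v i))\<^sup>2) has_sum (\<Sum>x\<in>UNIV. (cmod (c x))\<^sup>2 * (vnorm v)\<^sup>2))
      (UNIV \<times> UNIV)"
    by (rule has_sum_Times_finite) (auto intro: has_sum_cmult_right has_sum_power2_vnorm[OF v])
  then have f_sq: "((\<lambda>z. (cmod (f z))\<^sup>2) has_sum (\<Sum>x\<in>UNIV. (cmod (c x))\<^sup>2 * (vnorm v)\<^sup>2)) (UNIV \<times> UNIV)"
    by (simp add: f_def norm_mult power_mult_distrib case_prod_unfold)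
  have "l2 UNIV (\<lambda>z. \<Sum>x\<in>UNIV. c x * (\<lambda>(a, j). mapply (U a x) v j) z)"
    by (intro l2_sum l2_mult l2_mapply_block_column[OF U v]) auto
  then have l2_w: "l2 UNIV w"
    unfolding w_def by (simp add: case_prod_unfold)
  have "l2 (UNIV \<times> I) f"
    using has_sum_imp_summable[OF f_sq] l2_vanishes[OF v] unfolding l2_def by (auto simp: f_def)
  moreover have "mapply (blockmat U) f = w"
  proof
    fix z
    show "mapply (blockmat U) f z = w z"
      unfolding f_def w_def by (cases z) (simp only: mapply_blockmat_tensor[OF U v] prod.case)
  qed
  ultimately have "vnorm w = vnorm f"
    using BI unfolding block_isometry_def by auto
  moreover have "(vnorm f)\<^sup>2 = (\<Sum>x\<in>UNIV. (cmod (c x))\<^sup>2) * (vnorm v)\<^sup>2"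
    unfolding power2_vnorm[of f] using infsumI[OF f_sq] by (simp add: sum_distrib_right)
  ultimately show ?thesis
    using has_sum_power2_vnorm[OF l2_w] unfolding w_def by (simp add: case_prod_unfold)
qed

lemma phiU_apply:
  fixes U :: "'a::finite \<Rightarrow> 'x::finite \<Rightarrow> 'u \<Rightarrow> 'v \<Rightarrow> complex"
  assumes U: "\<And>a x. bop I J (U a x)" and v: "l2 I v"
  shows "mapply (phiU U S) v = (\<lambda>j. \<Sum>x\<in>UNIV. \<Sum>a\<in>UNIV. S x a * mapply (U a x) v j)"
proof
  fix j
  have row: "(\<lambda>i. U a x j i * v i) summable_on UNIV" for a x
    by (rule summable_on_bop_row[OF U v])
  have "mapply (phiU U S) v j = infsum (\<lambda>i. \<Sum>x\<in>UNIV. \<Sum>a\<in>UNIV. S x a * (U a x j i * v i)) UNIV"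
    unfolding mapply_def phiU_def by (simp add: sum_distrib_right mult.assoc)
  also have "\<dots> = (\<Sum>x\<in>UNIV. \<Sum>a\<in>UNIV. S x a * mapply (U a x) v j)"
    by (simp add: infsum_sum summable_on_sum summable_on_cmult_right row infsum_cmult_right' mapply_def)
  finally show "mapply (phiU U S) v j = (\<Sum>x\<in>UNIV. \<Sum>a\<in>UNIV. S x a * mapply (U a x) v j)" .
qed

lemma l2_mapply_phiU:
  fixes U :: "'a::finite \<Rightarrow> 'x::finite \<Rightarrow> 'u \<Rightarrow> 'v \<Rightarrow> complex"
  assumes U: "\<And>a x. bop I J (U a x)" and v: "l2 I v"
  shows "l2 J (mapply (phiU U S) v)"
  unfolding phiU_apply[OF U v] by (intro l2_sum l2_mult l2_mapply[OF U v]) auto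

context spectral_setting
begin

text \<open>If sigma has density vectors v k, then (Gamma_U,sigma (x) id)(xi xi^* ) is the sum of u u^* over
  u = kraus_vec U (v k) j (see tensor_id_GammaU_eq below).\<close>
definition kraus_vec :: "('a \<Rightarrow> 'x \<Rightarrow> 'u \<Rightarrow> 'u \<Rightarrow> complex) \<Rightarrow> ('u \<Rightarrow> complex) \<Rightarrow> 'u \<Rightarrow> 'a \<times> 'r \<Rightarrow> complex" where
  "kraus_vec U v j = (\<lambda>(a, r). \<Sum>x\<in>UNIV. \<xi> (x, r) * cnj (mapply (U a x) v j))"

lemma has_sum_norm_\<xi>_fiber: "((\<lambda>r. \<Sum>x\<in>UNIV. (cmod (\<xi> (x, r)))\<^sup>2) has_sum 1) UNIV"
proof -
  have "((\<lambda>z. (cmod (\<xi> z))\<^sup>2) has_sum 1) (UNIV \<times> UNIV)"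
    using has_sum_power2_vnorm[OF l2_\<xi>] vnorm_\<xi> by simp
  from has_sum_swap[THEN iffD1, OF this]
  have "((\<lambda>(r, x). (cmod (\<xi> (x, r)))\<^sup>2) has_sum 1) (UNIV \<times> UNIV)"
    by (simp add: case_prod_unfold)
  then show ?thesis
    by (rule has_sum_Sigma'[where B="\<lambda>_. UNIV"]) auto
qed

lemma has_sum_norm_kraus_vec:
  fixes U :: "'a \<Rightarrow> 'x \<Rightarrow> 'u \<Rightarrow> 'u \<Rightarrow> complex"
  assumes BI: "block_isometry I J U" and v: "l2 I v"
  shows "((\<lambda>(j, p). (cmod (kraus_vec U v j p))\<^sup>2) has_sum (vnorm v)\<^sup>2) UNIV"
proof -
  let ?H = "\<lambda>(r, a, j). (cmod (\<Sum>x\<in>UNIV. cnj (\<xi> (x, r)) * mapply (U a x) v j))\<^sup>2"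
  let ?s = "\<lambda>r. (\<Sum>x\<in>UNIV. (cmod (\<xi> (x, r)))\<^sup>2) * (vnorm v)\<^sup>2"
  have fiber: "((\<lambda>y. ?H (r, y)) has_sum ?s r) UNIV" for r
    using has_sum_block_isometry_tensor[OF BI v, of "\<lambda>x. cnj (\<xi> (x, r))"] by (simp add: case_prod_unfold)
  have total: "(?s has_sum (vnorm v)\<^sup>2) UNIV"
    using has_sum_cmult_left[OF has_sum_norm_\<xi>_fiber, of "(vnorm v)\<^sup>2"] by simp
  have "(?H has_sum (vnorm v)\<^sup>2) (Sigma UNIV (\<lambda>_. UNIV))"
    by (rule has_sum_Sigma_nonneg[OF fiber total]) (simp add: case_prod_unfold)
  moreover have "(?H has_sum (vnorm v)\<^sup>2) UNIV = ((\<lambda>(j, p). (cmod (kraus_vec U v j p))\<^sup>2) has_sum (vnorm v)\<^sup>2) UNIV"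
  proof (rule has_sum_reindex_bij_witness[where j="\<lambda>(r, a, j). (j, a, r)" and i="\<lambda>(j, a, r). (r, a, j)"])
    fix z :: "'r \<times> 'a \<times> 'u"
    obtain r a j where z: "z = (r, a, j)"
      by (cases z) auto
    have "cnj (\<Sum>x\<in>UNIV. cnj (\<xi> (x, r)) * mapply (U a x) v j) = (\<Sum>x\<in>UNIV. \<xi> (x, r) * cnj (mapply (U a x) v j))"
      by simp
    then show "(\<lambda>(j, p). (cmod (kraus_vec U v j p))\<^sup>2) ((\<lambda>(r, a, j). (j, a, r)) z) = ?H z"
      unfolding z kraus_vec_def by (simp only: prod.case complex_mod_cnj flip: \<open>cnj _ = _\<close>)
  qed (auto simp: case_prod_unfold)
  ultimately show ?thesis
    by simp
qed

lemma l2_kraus_vec: "block_isometry I J U \<Longrightarrow> l2 I v \<Longrightarrow> l2 UNIV (kraus_vec U v j)"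
  using summable_on_SigmaD1[of "\<lambda>j p. (cmod (kraus_vec U v j p))\<^sup>2" UNIV "\<lambda>_. UNIV" j]
    has_sum_norm_kraus_vec[of I J U v]
  unfolding l2_def by (auto simp: has_sum_imp_summable)

lemma has_sum_vnorm_kraus_vec:
  fixes U :: "'a \<Rightarrow> 'x \<Rightarrow> 'u \<Rightarrow> 'u \<Rightarrow> complex"
  assumes BI: "block_isometry I J U" and v: "\<And>k. l2 I (v k)"
    and vs: "((\<lambda>k. (vnorm (v k))\<^sup>2) has_sum 1) UNIV"
  shows "((\<lambda>(k, j). (vnorm (kraus_vec U (v k) j))\<^sup>2) has_sum 1) UNIV"
proof -
  have fiber: "((\<lambda>j. (vnorm (kraus_vec U (v k) j))\<^sup>2) has_sum (vnorm (v k))\<^sup>2) UNIV" for k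
  proof -
    have h: "((\<lambda>(j, p). (cmod (kraus_vec U (v k) j p))\<^sup>2) has_sum (vnorm (v k))\<^sup>2) (Sigma UNIV (\<lambda>_. UNIV))"
      using has_sum_norm_kraus_vec[OF BI v] by simp
    show ?thesis
      by (rule has_sum_Sigma'[OF h]) (auto intro: has_sum_power2_vnorm l2_kraus_vec[OF BI v])
  qed
  have "((\<lambda>(k, j). (vnorm (kraus_vec U (v k) j))\<^sup>2) has_sum 1) (Sigma UNIV (\<lambda>_. UNIV))"
    by (rule has_sum_Sigma_nonneg[OF _ vs]) (simp_all add: fiber)
  then show ?thesis
    by simp
qed

lemma vinner_kraus_vec:
  fixes U :: "'a \<Rightarrow> 'x \<Rightarrow> 'u \<Rightarrow> 'u \<Rightarrow> complex"
  assumes U: "\<And>a x. bop I J (U a x)" and v: "l2 I v"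
  shows "vinner (kraus_vec U v j) (\<gamma> n) =
    (\<Sum>a\<in>UNIV. \<Sum>x\<in>UNIV. cnj (mapply (U a x) v j) * ptraceR (rank1 \<xi> (\<gamma> n)) x a)"
proof -
  let ?M = "\<lambda>a x. mapply (U a x) v j"
  have fiber: "(\<lambda>r. \<xi> (x, r) * cnj (\<gamma> n (a, r))) summable_on UNIV" for x a
    by (rule vinner_summable[OF l2_slice[OF l2_\<xi>] l2_slice[OF l2_\<gamma>]])
  have "vinner (kraus_vec U v j) (\<gamma> n)
      = infsum (\<lambda>(a, r). \<Sum>x\<in>UNIV. cnj (?M a x) * (\<xi> (x, r) * cnj (\<gamma> n (a, r)))) (UNIV \<times> UNIV)"
    unfolding vinner_def kraus_vec_def UNIV_Times_UNIV
    by (rule infsum_cong) (auto simp: sum_distrib_left sum_distrib_right mult_ac)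
  also have "\<dots> = (\<Sum>a\<in>UNIV. infsum (\<lambda>r. \<Sum>x\<in>UNIV. cnj (?M a x) * (\<xi> (x, r) * cnj (\<gamma> n (a, r)))) UNIV)"
    by (rule infsum_Times_finite) (auto intro!: summable_on_sum summable_on_cmult_right fiber)
  also have "\<dots> = (\<Sum>a\<in>UNIV. \<Sum>x\<in>UNIV. cnj (?M a x) * infsum (\<lambda>r. \<xi> (x, r) * cnj (\<gamma> n (a, r))) UNIV)"
    by (simp add: infsum_sum summable_on_cmult_right fiber infsum_cmult_right')
  finally show ?thesis
    unfolding ptraceR_def rank1_def by simp
qed

lemma norm_mapply_phiU_rho:
  fixes U :: "'a \<Rightarrow> 'x \<Rightarrow> 'u \<Rightarrow> 'u \<Rightarrow> complex"
  assumes U: "\<And>a x. bop I J (U a x)" and v: "l2 I v"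
  shows "(cmod (mapply (phiU U (rho \<xi> lam \<gamma> n)) v j))\<^sup>2 = lam n * (cmod (vinner (kraus_vec U v j) (\<gamma> n)))\<^sup>2"
proof -
  have "mapply (phiU U (rho \<xi> lam \<gamma> n)) v j
      = complex_of_real (sqrt (lam n)) * cnj (vinner (kraus_vec U v j) (\<gamma> n))"
    unfolding phiU_apply[OF U v] vinner_kraus_vec[OF U v] rho_def
    by (subst sum.swap) (simp add: sum_distrib_left mult_ac)
  then show ?thesis
    by (simp add: norm_mult power_mult_distrib lam_nonneg)
qed

definition channel_value :: "(('x \<Rightarrow> 'x \<Rightarrow> complex) \<Rightarrow> ('a \<Rightarrow> 'a \<Rightarrow> complex)) \<Rightarrow> real" where
  "channel_value \<Gamma> = Re (mtrace (mmul (tensor_id \<Gamma> (rank1 \<xi> \<xi>)) P))"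

definition column_norm_sq :: "('a \<Rightarrow> 'x \<Rightarrow> 'u \<Rightarrow> 'u \<Rightarrow> complex) \<Rightarrow> ('u \<Rightarrow> complex) \<Rightarrow> real" where
  "column_norm_sq U w = infsum (\<lambda>n. (vnorm (mapply (phiU U (rho \<xi> lam \<gamma> n)) w))\<^sup>2) UNIV"

end

section \<open>Channel values as column norms\<close>

lemma normal_state_vector:
  assumes "l2 I w" "vnorm w = 1"
  shows "normal_state I (\<lambda>T. vinner (mapply T w) w)"
proof -
  define v where "v k = (if k = 0 then w else (\<lambda>_. 0))" for k :: nat
  have "(\<lambda>k. (vnorm (v k))\<^sup>2) = (\<lambda>k. if k = 0 then 1 else 0)"
    using assms(2) by (simp add: v_def fun_eq_iff)
  then have "(\<lambda>k. (vnorm (v k))\<^sup>2) sums 1"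
    using sums_single[of 0 "\<lambda>_. 1::real"] by simp
  moreover have "(\<lambda>k. vinner (mapply T (v k)) (v k)) sums vinner (mapply T w) w" for T
    using sums_single[of 0 "\<lambda>_. vinner (mapply T w) w"] by (simp add: v_def if_distrib cong: if_cong)
  moreover have "l2 I (v k)" for k
    using assms(1) by (simp add: v_def)
  ultimately show ?thesis
    unfolding normal_state_def by blast
qed

locale state_setting = spectral_setting \<xi> P Nidx lam \<gamma>
  for \<xi> :: "'x::finite \<times> 'r \<Rightarrow> complex" and P :: "'a::finite \<times> 'r \<Rightarrow> 'a \<times> 'r \<Rightarrow> complex"
    and Nidx lam \<gamma> +
  fixes I J :: "'u set" and U :: "'a \<Rightarrow> 'x \<Rightarrow> 'u \<Rightarrow> 'u \<Rightarrow> complex"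
    and v :: "nat \<Rightarrow> 'u \<Rightarrow> complex" and \<sigma> :: "('u \<Rightarrow> 'u \<Rightarrow> complex) \<Rightarrow> complex"
  assumes block_isometry_U: "block_isometry I J U" and l2_v: "\<And>k. l2 I (v k)"
    and has_sum_vnorm_v: "((\<lambda>k. (vnorm (v k))\<^sup>2) has_sum 1) UNIV"
    and \<sigma>_sums: "\<And>T. bop I I T \<Longrightarrow> (\<lambda>k. vinner (mapply T (v k)) (v k)) sums \<sigma> T"
begin

lemmas bop_U = bop_block[OF block_isometry_U]

definition kraus :: "nat \<times> 'u \<Rightarrow> 'a \<times> 'r \<Rightarrow> complex" where
  "kraus m = kraus_vec U (v (fst m)) (snd m)"

lemma l2_kraus: "l2 UNIV (kraus m)"
  unfolding kraus_def by (rule l2_kraus_vec[OF block_isometry_U l2_v])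

lemma has_sum_vnorm_kraus: "((\<lambda>m. (vnorm (kraus m))\<^sup>2) has_sum 1) UNIV"
  using has_sum_vnorm_kraus_vec[OF block_isometry_U l2_v has_sum_vnorm_v]
  unfolding kraus_def by (simp add: case_prod_unfold)

lemma summable_vnorm_kraus: "(\<lambda>m. (vnorm (kraus m))\<^sup>2) summable_on UNIV"
  using has_sum_vnorm_kraus by (rule has_sum_imp_summable)

lemma summable_norm_kraus: "(\<lambda>m. (cmod (kraus m p))\<^sup>2) summable_on UNIV"
  by (rule summable_on_comparison_test[OF summable_vnorm_kraus])
    (auto intro: power_mono norm_le_vnorm[OF l2_kraus])

lemma sum_\<xi>_vinner_eq_infsum_kraus:
  "(\<Sum>x\<in>UNIV. \<Sum>x'\<in>UNIV. \<xi> (x, r) * cnj (\<xi> (x', r')) * vinner (mapply (U a' x') (v k)) (mapply (U a x) (v k)))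
   = infsum (\<lambda>j. kraus (k, j) (a, r) * cnj (kraus (k, j) (a', r'))) UNIV"
proof -
  let ?M = "\<lambda>a x j. mapply (U a x) (v k) j"
  have summable: "(\<lambda>j. ?M a' x' j * cnj (?M a x j)) summable_on UNIV" for a x a' x'
    by (rule vinner_summable[OF l2_mapply[OF bop_U l2_v] l2_mapply[OF bop_U l2_v]])
  have "infsum (\<lambda>j. kraus (k, j) (a, r) * cnj (kraus (k, j) (a', r'))) UNIV
      = infsum (\<lambda>j. \<Sum>x\<in>UNIV. \<Sum>x'\<in>UNIV. \<xi> (x, r) * cnj (\<xi> (x', r')) * (?M a' x' j * cnj (?M a x j))) UNIV"
    unfolding kraus_def kraus_vec_def fst_conv snd_conv prod.case cnj_sum sum_product
    by (intro infsum_cong sum.cong refl) (simp add: mult_ac)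
  also have "\<dots> = (\<Sum>x\<in>UNIV. \<Sum>x'\<in>UNIV. \<xi> (x, r) * cnj (\<xi> (x', r')) * vinner (mapply (U a' x') (v k)) (mapply (U a x) (v k)))"
    by (simp add: infsum_sum summable_on_sum summable_on_cmult_right summable infsum_cmult_right' vinner_def)
  finally show ?thesis ..
qed

lemma tensor_id_GammaU_eq:
  "tensor_id (GammaU U \<sigma>) (rank1 \<xi> \<xi>) (a, r) (a', r') = infsum (\<lambda>m. kraus m (a, r) * cnj (kraus m (a', r'))) UNIV"
proof -
  let ?T = "\<lambda>a x a' x'. mmul (adj (U a x)) (U a' x')"
  let ?g = "\<lambda>m. kraus m (a, r) * cnj (kraus m (a', r'))"
  have "(\<lambda>k. vinner (mapply (U a' x') (v k)) (mapply (U a x) (v k))) sums \<sigma> (?T a x a' x')" for a x a' x'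
    using \<sigma>_sums[OF bop_mmul[OF bop_U bop_adj[OF bop_U]]] by (simp add: vinner_mapply_mmul_adj[OF bop_U bop_U l2_v])
  then have "(\<lambda>k. \<Sum>x\<in>UNIV. \<Sum>x'\<in>UNIV. \<xi> (x, r) * cnj (\<xi> (x', r')) * vinner (mapply (U a' x') (v k)) (mapply (U a x) (v k)))
      sums tensor_id (GammaU U \<sigma>) (rank1 \<xi> \<xi>) (a, r) (a', r')"
    unfolding tensor_id_def GammaU_def rank1_def by (simp add: sums_sum sums_mult)
  moreover have "(\<lambda>k. infsum (\<lambda>j. ?g (k, j)) UNIV) sums infsum ?g UNIV"
  proof -
    have summable: "?g summable_on UNIV"
      using Cauchy_Schwarz_infsum_complex(1)[OF summable_norm_kraus, of "\<lambda>m. cnj (kraus m (a', r'))"]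
        summable_norm_kraus[of "(a', r')"] by simp
    have "(\<lambda>(k, j). ?g (k, j)) summable_on (UNIV \<times> UNIV)"
      using summable by (simp add: case_prod_unfold)
    then have fiber: "(\<lambda>j. ?g (k, j)) summable_on UNIV" for k
      using summable_on_SigmaD1[of "\<lambda>k j. ?g (k, j)" UNIV "\<lambda>_. UNIV" k] by simp
    have "(?g has_sum infsum ?g UNIV) (Sigma UNIV (\<lambda>_. UNIV))"
      using has_sum_infsum[OF summable] by simp
    then have "((\<lambda>k. infsum (\<lambda>j. ?g (k, j)) UNIV) has_sum infsum ?g UNIV) UNIV"
      by (rule has_sum_Sigma') (use fiber in \<open>auto intro: has_sum_infsum\<close>)
    then show ?thesis
      by (rule has_sum_imp_sums)
  qed
  ultimately show ?thesis
    unfolding sum_\<xi>_vinner_eq_infsum_kraus using sums_unique2 by blast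
qed

lemma infsum_tensor_id_mult_P:
  "infsum (\<lambda>q. tensor_id (GammaU U \<sigma>) (rank1 \<xi> \<xi>) p q * P q p) UNIV
     = infsum (\<lambda>m. kraus m p * vinner (\<lambda>q. P q p) (kraus m)) UNIV"
proof -
  obtain C where C: "0 \<le> C" "\<And>p. l2 UNIV (\<lambda>q. P q p) \<and> vnorm (\<lambda>q. P q p) \<le> C"
    using bop_columnE[OF bop_P] by metis
  define H where "H m q = kraus m p * (cnj (kraus m q) * P q p)" for m q
  have fiber: "H m summable_on UNIV" for m
    unfolding H_def by (intro summable_on_cmult_right summable_on_l2_mult[OF l2_cnj[OF l2_kraus] conjunct1[OF C(2)]])
  have bound: "infsum (\<lambda>q. cmod (H m q)) UNIV \<le> C * (cmod (kraus m p) * vnorm (kraus m))" for m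
  proof -
    have "infsum (\<lambda>q. cmod (H m q)) UNIV = cmod (kraus m p) * infsum (\<lambda>q. \<bar>cmod (kraus m q) * cmod (P q p)\<bar>) UNIV"
      unfolding H_def by (simp add: norm_mult infsum_cmult_right')
    also have "\<dots> \<le> cmod (kraus m p) * (vnorm (kraus m) * vnorm (\<lambda>q. P q p))"
      using Cauchy_Schwarz_infsum(2)[OF l2_summable[OF l2_kraus] l2_summable[of UNIV "\<lambda>q. P q p"]] C(2)
      by (intro mult_left_mono) (auto simp: vnorm_def)
    also have "\<dots> \<le> cmod (kraus m p) * (vnorm (kraus m) * C)"
      using C(2)[of p] by (intro mult_left_mono) (auto simp: vnorm_nonneg)
    finally show ?thesis
      by (simp add: mult_ac)
  qed
  have "(\<lambda>m. C * (cmod (kraus m p) * vnorm (kraus m))) summable_on UNIV"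
    by (intro summable_on_cmult_right summable_on_mult_real summable_norm_kraus)
      (simp add: summable_vnorm_kraus)
  then have summable: "(\<lambda>(m, q). H m q) summable_on UNIV \<times> UNIV"
    by (rule summable_on_Times_abs_bound[OF fiber bound])
  have "tensor_id (GammaU U \<sigma>) (rank1 \<xi> \<xi>) p q * P q p = infsum (\<lambda>m. H m q) UNIV" for q
    using tensor_id_GammaU_eq[of "fst p" "snd p" "fst q" "snd q"]
    by (simp add: H_def infsum_cmult_left'[symmetric] mult.assoc)
  then have "infsum (\<lambda>q. tensor_id (GammaU U \<sigma>) (rank1 \<xi> \<xi>) p q * P q p) UNIV
      = infsum (\<lambda>q. infsum (\<lambda>m. H m q) UNIV) UNIV"
    by simp
  also have "\<dots> = infsum (\<lambda>m. infsum (H m) UNIV) UNIV"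
    using infsum_swap_banach[OF summable] by simp
  also have "\<dots> = infsum (\<lambda>m. kraus m p * vinner (\<lambda>q. P q p) (kraus m)) UNIV"
    unfolding H_def vinner_def by (simp add: infsum_cmult_right' mult.commute)
  finally show ?thesis .
qed

lemma summable_kraus_column_P: "(\<lambda>(m, p). kraus m p * vinner (\<lambda>q. P q p) (kraus m)) summable_on UNIV \<times> UNIV"
proof -
  obtain C where C: "0 \<le> C" "\<And>g. l2 UNIV g \<Longrightarrow> l2 UNIV (mapply (adj P) g) \<and> vnorm (mapply (adj P) g) \<le> C * vnorm g"
    using bopE[OF bop_adj[OF bop_P]] by metis
  have bound: "infsum (\<lambda>p. cmod (kraus m p * vinner (\<lambda>q. P q p) (kraus m))) UNIV \<le> C * (vnorm (kraus m))\<^sup>2" for m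
  proof -
    have l2_adj: "l2 UNIV (mapply (adj P) (kraus m))"
      using C(2)[OF l2_kraus] by blast
    have "cmod (vinner (\<lambda>q. P q p) (kraus m)) = cmod (mapply (adj P) (kraus m) p)" for p
      unfolding mapply_adj by (simp add: vinner_commute[of "kraus m"])
    then have "infsum (\<lambda>p. cmod (kraus m p * vinner (\<lambda>q. P q p) (kraus m))) UNIV
        = infsum (\<lambda>p. \<bar>cmod (kraus m p) * cmod (mapply (adj P) (kraus m) p)\<bar>) UNIV"
      by (simp add: norm_mult)
    also have "\<dots> \<le> vnorm (kraus m) * vnorm (mapply (adj P) (kraus m))"
      using Cauchy_Schwarz_infsum(2)[OF l2_summable[OF l2_kraus] l2_summable[OF l2_adj]]
      by (simp add: vnorm_def)
    also have "\<dots> \<le> vnorm (kraus m) * (C * vnorm (kraus m))"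
      using C(2)[OF l2_kraus] by (intro mult_left_mono vnorm_nonneg) auto
    finally show ?thesis
      by (simp add: power2_eq_square mult_ac)
  qed
  have fiber: "(\<lambda>p. kraus m p * vinner (\<lambda>q. P q p) (kraus m)) summable_on UNIV" for m
    using has_sum_vinner_mapply[OF bop_P l2_kraus l2_kraus] by (rule has_sum_imp_summable)
  have "(\<lambda>m. C * (vnorm (kraus m))\<^sup>2) summable_on UNIV"
    by (intro summable_on_cmult_right summable_vnorm_kraus)
  then show ?thesis
    by (rule summable_on_Times_abs_bound[OF fiber bound])
qed

lemma has_sum_vinner_P_kraus:
  "((\<lambda>m. vinner (mapply P (kraus m)) (kraus m)) has_sum mtrace (mmul (tensor_id (GammaU U \<sigma>) (rank1 \<xi> \<xi>)) P)) UNIV"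
proof -
  define K where "K m p = kraus m p * vinner (\<lambda>q. P q p) (kraus m)" for m p
  have fiber: "(K m has_sum vinner (mapply P (kraus m)) (kraus m)) UNIV" for m
    unfolding K_def[abs_def] by (rule has_sum_vinner_mapply[OF bop_P l2_kraus l2_kraus])
  have summable: "(\<lambda>(m, p). K m p) summable_on UNIV \<times> UNIV"
    unfolding K_def by (rule summable_kraus_column_P)
  have "mtrace (mmul (tensor_id (GammaU U \<sigma>) (rank1 \<xi> \<xi>)) P) = infsum (\<lambda>p. infsum (\<lambda>m. K m p) UNIV) UNIV"
    unfolding mtrace_def mmul_def K_def infsum_tensor_id_mult_P ..
  also have "\<dots> = infsum (\<lambda>m. infsum (K m) UNIV) UNIV"
    using infsum_swap_banach[OF summable] by simp
  also have "\<dots> = infsum (\<lambda>m. vinner (mapply P (kraus m)) (kraus m)) UNIV"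
    using infsumI[OF fiber] by simp
  finally have trace: "mtrace (mmul (tensor_id (GammaU U \<sigma>) (rank1 \<xi> \<xi>)) P)
      = infsum (\<lambda>m. vinner (mapply P (kraus m)) (kraus m)) UNIV" .
  have "(\<lambda>m. infsum (K m) UNIV) summable_on UNIV"
    using summable_on_Sigma_banach[of "\<lambda>m p. K m p" UNIV "\<lambda>_. UNIV"] summable by simp
  then have "(\<lambda>m. vinner (mapply P (kraus m)) (kraus m)) summable_on UNIV"
    using infsumI[OF fiber] by simp
  then show ?thesis
    unfolding trace by (rule has_sum_infsum)
qed

lemma has_sum_channel_value:
  "((\<lambda>m. Re (vinner (mapply P (kraus m)) (kraus m))) has_sum channel_value (GammaU U \<sigma>)) UNIV"
  unfolding channel_value_def by (rule has_sum_Re[OF has_sum_vinner_P_kraus])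

lemma channel_value_le:
  assumes "\<And>u. l2 UNIV u \<Longrightarrow> Re (vinner (mapply P u) u) \<le> C * (vnorm u)\<^sup>2"
  shows "channel_value (GammaU U \<sigma>) \<le> C"
proof -
  have "((\<lambda>m. C * (vnorm (kraus m))\<^sup>2) has_sum C) UNIV"
    using has_sum_cmult_right[OF has_sum_vnorm_kraus, of C] by simp
  then show ?thesis
    by (rule has_sum_mono[OF has_sum_channel_value]) (rule assms[OF l2_kraus])
qed

lemma has_sum_norm_mapply_phiU_rho:
  "((\<lambda>(k, n, j). (cmod (mapply (phiU U (rho \<xi> lam \<gamma> n)) (v k) j))\<^sup>2) has_sum channel_value (GammaU U \<sigma>))
    (Sigma UNIV (\<lambda>_. UNIV))"
proof -
  let ?F = "\<lambda>(m, n). (cmod (mapply (phiU U (rho \<xi> lam \<gamma> n)) (v (fst m)) (snd m)))\<^sup>2"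
  have "((\<lambda>n. ?F (m, n)) has_sum Re (vinner (mapply P (kraus m)) (kraus m))) UNIV" for m
    using has_sum_quadratic_form[OF l2_kraus, of m]
    by (simp add: norm_mapply_phiU_rho[OF bop_U l2_v] kraus_def)
  then have "(?F has_sum channel_value (GammaU U \<sigma>)) (Sigma UNIV (\<lambda>_. UNIV))"
    by (rule has_sum_Sigma_nonneg[OF _ has_sum_channel_value]) (simp add: case_prod_unfold)
  moreover have "(?F has_sum channel_value (GammaU U \<sigma>)) UNIV
      = ((\<lambda>(k, n, j). (cmod (mapply (phiU U (rho \<xi> lam \<gamma> n)) (v k) j))\<^sup>2) has_sum channel_value (GammaU U \<sigma>)) UNIV"
    by (rule has_sum_reindex_bij_witness[where j="\<lambda>((k, j), n). (k, n, j)" and i="\<lambda>(k, n, j). ((k, j), n)"])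
      (auto simp: case_prod_unfold)
  ultimately show ?thesis
    by simp
qed

lemma has_sum_column_norm_sq:
  "((\<lambda>k. column_norm_sq U (v k)) has_sum channel_value (GammaU U \<sigma>)) UNIV"
  and summable_column_norm_sq:
  "(\<lambda>n. (vnorm (mapply (phiU U (rho \<xi> lam \<gamma> n)) (v k)))\<^sup>2) summable_on UNIV"
proof -
  let ?G = "\<lambda>k (n, j). (cmod (mapply (phiU U (rho \<xi> lam \<gamma> n)) (v k) j))\<^sup>2"
  have total: "((\<lambda>(k, z). ?G k z) has_sum channel_value (GammaU U \<sigma>)) (Sigma UNIV (\<lambda>_. UNIV))"
    using has_sum_norm_mapply_phiU_rho by (simp add: case_prod_unfold)
  have fiber: "?G k summable_on UNIV" for k
    using summable_on_SigmaD1[OF has_sum_imp_summable[OF total], of k] by simp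
  have column: "((\<lambda>n. (vnorm (mapply (phiU U (rho \<xi> lam \<gamma> n)) (v k)))\<^sup>2) has_sum infsum (?G k) UNIV) UNIV" for k
  proof (rule has_sum_Sigma'[where B="\<lambda>_. UNIV"])
    show "(?G k has_sum infsum (?G k) UNIV) (Sigma UNIV (\<lambda>_. UNIV))"
      using has_sum_infsum[OF fiber] by simp
    show "((\<lambda>j. ?G k (n, j)) has_sum (vnorm (mapply (phiU U (rho \<xi> lam \<gamma> n)) (v k)))\<^sup>2) UNIV" for n
      using has_sum_power2_vnorm[OF l2_mapply_phiU[OF bop_U l2_v]] by simp
  qed
  then show "(\<lambda>n. (vnorm (mapply (phiU U (rho \<xi> lam \<gamma> n)) (v k)))\<^sup>2) summable_on UNIV"
    by (rule has_sum_imp_summable)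
  have "column_norm_sq U (v k) = infsum (?G k) UNIV" for k
    unfolding column_norm_sq_def using column by (rule infsumI)
  moreover have "((\<lambda>k. infsum (?G k) UNIV) has_sum channel_value (GammaU U \<sigma>)) UNIV"
    by (rule has_sum_Sigma'[OF total]) (use fiber in \<open>auto intro: has_sum_infsum\<close>)
  ultimately show "((\<lambda>k. column_norm_sq U (v k)) has_sum channel_value (GammaU U \<sigma>)) UNIV"
    by simp
qed

end

lemma opnorm_le:
  assumes "\<And>f. l2 J f \<Longrightarrow> vnorm f \<le> 1 \<Longrightarrow> vnorm (mapply M f) \<le> c"
  shows "opnorm J M \<le> c"
  unfolding opnorm_def by (rule cSup_least) (auto intro: assms exI[of _ "\<lambda>_. 0"])

lemma norm_mapply_le_opnorm:
  assumes "\<And>f. l2 J f \<Longrightarrow> vnorm f \<le> 1 \<Longrightarrow> vnorm (mapply M f) \<le> c"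
    and "l2 J f" "vnorm f \<le> 1"
  shows "vnorm (mapply M f) \<le> opnorm J M"
  unfolding opnorm_def using assms by (intro cSup_upper) (auto simp: bdd_above_def)

lemma l2_Pair_slice:
  assumes f: "l2 (K \<times> I) f"
  shows "l2 I (\<lambda>i. f (k, i))" and "vnorm (\<lambda>i. f (k, i)) \<le> vnorm f"
proof -
  have summable: "(\<lambda>z. (cmod (f z))\<^sup>2) summable_on range (Pair k)"
    by (rule summable_on_subset_banach[OF l2_summable[OF f]]) auto
  then have "(\<lambda>i. (cmod (f (k, i)))\<^sup>2) summable_on UNIV"
    by (subst (asm) summable_on_reindex) (auto simp: inj_on_def o_def)
  then show "l2 I (\<lambda>i. f (k, i))"
    using l2_vanishes[OF f] unfolding l2_def by auto
  have "infsum (\<lambda>i. (cmod (f (k, i)))\<^sup>2) UNIV = infsum (\<lambda>z. (cmod (f z))\<^sup>2) (range (Pair k))"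
    by (subst infsum_reindex) (auto simp: inj_on_def o_def)
  also have "\<dots> \<le> infsum (\<lambda>z. (cmod (f z))\<^sup>2) UNIV"
    by (rule infsum_mono_neutral[OF summable l2_summable[OF f]]) auto
  finally show "vnorm (\<lambda>i. f (k, i)) \<le> vnorm f"
    unfolding vnorm_def by (rule real_sqrt_le_mono)
qed

lemma l2_Pair_embed:
  assumes w: "l2 I w" and "k \<in> K"
  shows "l2 (K \<times> I) (\<lambda>(l, i). if l = k then w i else 0)"
    and "vnorm (\<lambda>(l, i). if l = k then w i else 0) = vnorm w"
proof -
  have sq: "(\<lambda>z. (cmod ((\<lambda>(l, i). if l = k then w i else 0) z))\<^sup>2) = (\<lambda>(l, i). if l = k then (cmod (w i))\<^sup>2 else 0)"
    by (auto simp: fun_eq_iff)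
  show "l2 (K \<times> I) (\<lambda>(l, i). if l = k then w i else 0)"
    unfolding l2_def sq using summable_on_Pair_slice[OF l2_summable[OF w]] l2_vanishes[OF w] \<open>k \<in> K\<close>
    by auto
  show "vnorm (\<lambda>(l, i). if l = k then w i else 0) = vnorm w"
    unfolding vnorm_def sq infsum_Pair_slice ..
qed

definition first_column :: "(nat \<Rightarrow> 'x \<Rightarrow> 'a \<Rightarrow> complex) \<Rightarrow> nat \<Rightarrow> nat \<Rightarrow> 'x \<Rightarrow> 'a \<Rightarrow> complex" where
  "first_column \<rho> = (\<lambda>k l. if l = 0 then \<rho> k else (\<lambda>_ _. 0))"

lemma MN1_norm_eq: "MN1_norm R \<rho> N = Mn_norm R N (first_column \<rho>)"
  by (simp add: MN1_norm_def first_column_def)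

lemma mapply_ampl_column:
  fixes U :: "'a::finite \<Rightarrow> 'x::finite \<Rightarrow> 'u \<Rightarrow> 'u \<Rightarrow> complex"
  shows "mapply (ampl U N (first_column \<rho>)) f (k, j) =
    (if k < N then mapply (phiU U (\<rho> k)) (\<lambda>i. f (0, i)) j else 0)"
proof -
  have "ampl U N (first_column \<rho>) (k, j) z * f z =
      (if k < N then (case z of (l, i) \<Rightarrow> if l = 0 then phiU U (\<rho> k) j i * f (0, i) else 0) else 0)" for z
    by (cases z) (auto simp: ampl_def phiU_def first_column_def)
  then show ?thesis
    unfolding mapply_def by (simp add: infsum_Pair_slice)
qed

lemma power2_vnorm_mapply_ampl_column:
  fixes U :: "'a::finite \<Rightarrow> 'x::finite \<Rightarrow> 'u \<Rightarrow> 'u \<Rightarrow> complex"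
  assumes U: "\<And>a x. bop I J (U a x)" and w: "l2 I (\<lambda>i. f (0, i))"
  shows "(vnorm (mapply (ampl U N (first_column \<rho>)) f))\<^sup>2 =
    (\<Sum>n<N. (vnorm (mapply (phiU U (\<rho> n)) (\<lambda>i. f (0, i))))\<^sup>2)"
proof -
  let ?g = "\<lambda>n j. (cmod (mapply (phiU U (\<rho> n)) (\<lambda>i. f (0, i)) j))\<^sup>2"
  have "(vnorm (mapply (ampl U N (first_column \<rho>)) f))\<^sup>2
      = infsum (\<lambda>(n, j). ?g n j) ({..<N} \<times> UNIV)"
    unfolding power2_vnorm by (rule infsum_cong_neutral) (auto simp: mapply_ampl_column split: if_splits)
  also have "\<dots> = (\<Sum>n<N. (vnorm (mapply (phiU U (\<rho> n)) (\<lambda>i. f (0, i))))\<^sup>2)"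
    by (subst infsum_Times_finite) (auto intro: l2_summable[OF l2_mapply_phiU[OF U w]] simp: power2_vnorm)
  finally show ?thesis .
qed

context spectral_setting
begin

lemma column_norm_sq_zero [simp]: "column_norm_sq U (\<lambda>_. 0) = 0"
  by (simp add: column_norm_sq_def)

lemma column_norm_sq_nonneg: "0 \<le> column_norm_sq U w"
  by (simp add: column_norm_sq_def infsum_nonneg)

lemma norm_mapply_phiU_mult:
  "(vnorm (mapply (phiU U S) (\<lambda>i. c * w i)))\<^sup>2 = (cmod c)\<^sup>2 * (vnorm (mapply (phiU U S) w))\<^sup>2"
  by (simp add: mapply_mult vnorm_mult power_mult_distrib)

lemma column_norm_sq_mult: "column_norm_sq U (\<lambda>i. c * w i) = (cmod c)\<^sup>2 * column_norm_sq U w"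
  unfolding column_norm_sq_def norm_mapply_phiU_mult by (rule infsum_cmult_right')

lemma state_setting_of_normal_state:
  fixes U :: "'a \<Rightarrow> 'x \<Rightarrow> 'u \<Rightarrow> 'u \<Rightarrow> complex"
  assumes "block_isometry I J U" "normal_state I \<sigma>"
  obtains v where "state_setting \<xi> P Nidx lam \<gamma> I J U v \<sigma>"
proof -
  obtain v where v: "\<And>k. l2 I (v k)" "(\<lambda>k. (vnorm (v k))\<^sup>2) sums 1"
    "\<And>T. bop I I T \<Longrightarrow> (\<lambda>k. vinner (mapply T (v k)) (v k)) sums \<sigma> T"
    using assms(2) unfolding normal_state_def by blast
  have "((\<lambda>k. (vnorm (v k))\<^sup>2) has_sum 1) UNIV"
    using v(2) by (rule sums_nonneg_imp_has_sum) simp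
  with assms(1) v(1,3) show ?thesis
    by (intro that[of v]) unfold_locales
qed

lemma channel_value_GammaU_le:
  fixes U :: "'a \<Rightarrow> 'x \<Rightarrow> 'u \<Rightarrow> 'u \<Rightarrow> complex"
  assumes "block_isometry I J U" "normal_state I \<sigma>"
    and "\<And>u. l2 UNIV u \<Longrightarrow> Re (vinner (mapply P u) u) \<le> C * (vnorm u)\<^sup>2"
  shows "channel_value (GammaU U \<sigma>) \<le> C"
proof -
  obtain v where "state_setting \<xi> P Nidx lam \<gamma> I J U v \<sigma>"
    using state_setting_of_normal_state[OF assms(1,2)] .
  then interpret state_setting \<xi> P Nidx lam \<gamma> I J U v \<sigma> .
  show ?thesis
    using assms(3) by (rule channel_value_le)
qed

lemma column_norm_sq_unit:
  fixes U :: "'a \<Rightarrow> 'x \<Rightarrow> 'u \<Rightarrow> 'u \<Rightarrow> complex"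
  assumes BI: "block_isometry I J U" and w: "l2 I w" "vnorm w = 1"
  shows "column_norm_sq U w = channel_value (GammaU U (\<lambda>T. vinner (mapply T w) w))"
    and "(\<lambda>n. (vnorm (mapply (phiU U (rho \<xi> lam \<gamma> n)) w))\<^sup>2) summable_on UNIV"
proof -
  define v where "v k = (if k = 0 then w else (\<lambda>_. 0))" for k :: nat
  interpret state_setting \<xi> P Nidx lam \<gamma> I J U v "\<lambda>T. vinner (mapply T w) w"
  proof
    show "l2 I (v k)" for k
      using w by (simp add: v_def)
    have "(\<lambda>k. (vnorm (v k))\<^sup>2) = (\<lambda>k. if k = 0 then 1 else 0)"
      using w by (simp add: v_def fun_eq_iff)
    then show "((\<lambda>k. (vnorm (v k))\<^sup>2) has_sum 1) UNIV"
      using has_sum_if_eq[of 0 "1::real"] by simp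
    show "(\<lambda>k. vinner (mapply T (v k)) (v k)) sums vinner (mapply T w) w" for T
      using sums_single[of 0 "\<lambda>_. vinner (mapply T w) w"] by (simp add: v_def if_distrib cong: if_cong)
  qed (rule BI)
  have "((\<lambda>k. column_norm_sq U (v k)) has_sum column_norm_sq U w) UNIV"
    using has_sum_if_eq[of 0 "column_norm_sq U w"] by (simp add: v_def if_distrib cong: if_cong)
  then show "column_norm_sq U w = channel_value (GammaU U (\<lambda>T. vinner (mapply T w) w))"
    using has_sum_column_norm_sq has_sum_unique by blast
  show "(\<lambda>n. (vnorm (mapply (phiU U (rho \<xi> lam \<gamma> n)) w))\<^sup>2) summable_on UNIV"
    using summable_column_norm_sq[of 0] by (simp add: v_def)
qed

lemma summable_column_norm_sq:
  fixes U :: "'a \<Rightarrow> 'x \<Rightarrow> 'u \<Rightarrow> 'u \<Rightarrow> complex"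
  assumes "block_isometry I J U" "l2 I w"
  shows "(\<lambda>n. (vnorm (mapply (phiU U (rho \<xi> lam \<gamma> n)) w))\<^sup>2) summable_on UNIV"
proof (cases "vnorm w = 0")
  case True
  then show ?thesis
    using vnorm_eq_0_imp[OF assms(2)] by simp
next
  case False
  then obtain u where u: "l2 I u" "vnorm u = 1" "w = (\<lambda>i. complex_of_real (vnorm w) * u i)"
    using l2_normalize[OF assms(2)] by metis
  show ?thesis
    by (subst u(3), unfold norm_mapply_phiU_mult)
      (intro summable_on_cmult_right column_norm_sq_unit(2)[OF assms(1) u(1,2)])
qed

lemma column_norm_sq_le:
  fixes U :: "'a \<Rightarrow> 'x \<Rightarrow> 'u \<Rightarrow> 'u \<Rightarrow> complex"
  assumes "l2 I w" and unit: "\<And>u. l2 I u \<Longrightarrow> vnorm u = 1 \<Longrightarrow> column_norm_sq U u \<le> c"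
  shows "column_norm_sq U w \<le> c * (vnorm w)\<^sup>2"
proof (cases "vnorm w = 0")
  case True
  then show ?thesis
    using vnorm_eq_0_imp[OF assms(1)] by simp
next
  case False
  then obtain u where u: "l2 I u" "vnorm u = 1" "w = (\<lambda>i. complex_of_real (vnorm w) * u i)"
    using l2_normalize[OF assms(1)] by metis
  have "column_norm_sq U w = (vnorm w)\<^sup>2 * column_norm_sq U u"
    by (subst u(3)) (simp add: column_norm_sq_mult)
  also have "\<dots> \<le> (vnorm w)\<^sup>2 * c"
    by (intro mult_left_mono unit u(1,2)) simp
  finally show ?thesis
    by (simp add: mult.commute)
qed

end

section \<open>Comparison of the two quantities\<close>

locale resource_setting = spectral_setting \<xi> P Nidx lam \<gamma>
  for \<xi> :: "'x::finite \<times> 'r \<Rightarrow> complex" and P :: "'a::finite \<times> 'r \<Rightarrow> 'a \<times> 'r \<Rightarrow> complex"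
    and Nidx lam \<gamma> +
  fixes R :: "('u set \<times> 'u set \<times> ('a \<Rightarrow> 'x \<Rightarrow> 'u \<Rightarrow> 'u \<Rightarrow> complex)) set"
  assumes resource: "resource R"
begin

lemma block_isometry_R: "(I, J, U) \<in> R \<Longrightarrow> block_isometry I J U"
  using resource unfolding resource_def by blast

lemma R_has_basis_vector:
  obtains I J U i where "(I, J, U) \<in> R" "i \<in> I"
proof -
  have "(\<lambda>(_::'x) (_::'a). 1::complex) \<noteq> (\<lambda>_ _. 0)"
    by (auto simp: fun_eq_iff)
  then obtain I J U where R: "(I, J, U) \<in> R" and "phiU U (\<lambda>_ _. 1) \<noteq> (\<lambda>_ _. 0)"
    using resource unfolding resource_def by blast
  then obtain j i where "(\<Sum>x\<in>UNIV. \<Sum>a\<in>UNIV. U a x j i) \<noteq> 0"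
    unfolding phiU_def by (auto simp: fun_eq_iff)
  then obtain x where "(\<Sum>a\<in>UNIV. U a x j i) \<noteq> 0"
    by (meson sum.neutral)
  then obtain a where "U a x j i \<noteq> 0"
    by (meson sum.neutral)
  then have "i \<in> I"
    using bop_vanishes[OF bop_block[OF block_isometry_R[OF R]]] by metis
  with R show ?thesis
    by (rule that)
qed

lemma omegaR_eq_Sup: "omegaR R \<xi> P = Sup (channel_value ` QC R)"
  unfolding omegaR_def channel_value_def by (simp add: setcompr_eq_image)

lemma bdd_above_channel_value: "bdd_above (channel_value ` QC R)"
proof -
  obtain C where C: "\<And>u. l2 UNIV u \<Longrightarrow> Re (vinner (mapply P u) u) \<le> C * (vnorm u)\<^sup>2"
    using quadratic_form_boundE by metis
  have "channel_value \<Gamma> \<le> C" if \<Gamma>: "\<Gamma> \<in> QC R" for \<Gamma>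
  proof -
    obtain I J U \<sigma> where "\<Gamma> = GammaU U \<sigma>" and R: "(I, J, U) \<in> R" and \<sigma>: "normal_state I \<sigma>"
      using \<Gamma> unfolding QC_def by blast
    then show ?thesis
      using channel_value_GammaU_le[OF block_isometry_R[OF R] \<sigma> C] by simp
  qed
  then show ?thesis
    by (auto simp: bdd_above_def)
qed

lemma column_norm_sq_le_omegaR:
  assumes "(I, J, U) \<in> R" "l2 I w"
  shows "column_norm_sq U w \<le> omegaR R \<xi> P * (vnorm w)\<^sup>2"
proof (rule column_norm_sq_le[OF assms(2)])
  fix u
  assume u: "l2 I u" "vnorm u = 1"
  have "GammaU U (\<lambda>T. vinner (mapply T u) u) \<in> QC R"
    using assms(1) normal_state_vector[OF u] unfolding QC_def by blast
  then show "column_norm_sq U u \<le> omegaR R \<xi> P"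
    unfolding column_norm_sq_unit(1)[OF block_isometry_R[OF assms(1)] u] omegaR_eq_Sup
    by (intro cSup_upper imageI bdd_above_channel_value)
qed

lemma omegaR_nonneg: "0 \<le> omegaR R \<xi> P"
proof -
  obtain I J U i where R: "(I, J, U) \<in> R" and i: "i \<in> I"
    by (rule R_has_basis_vector)
  have "0 \<le> column_norm_sq U (evec i)"
    by (rule column_norm_sq_nonneg)
  also have "\<dots> \<le> omegaR R \<xi> P * (vnorm (evec i))\<^sup>2"
    by (rule column_norm_sq_le_omegaR[OF R l2_evec[OF i]])
  finally show ?thesis
    by (simp add: vnorm_evec)
qed

lemma norm_mapply_ampl_le:
  assumes "(I, J, U) \<in> R" "l2 ({..<N} \<times> I) f" "vnorm f \<le> 1"
  shows "vnorm (mapply (ampl U N (first_column (rho \<xi> lam \<gamma>))) f) \<le> sqrt (omegaR R \<xi> P)"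
proof -
  note BI = block_isometry_R[OF assms(1)]
  note slice = l2_Pair_slice[OF assms(2), of 0]
  have "(vnorm (mapply (ampl U N (first_column (rho \<xi> lam \<gamma>))) f))\<^sup>2
      = (\<Sum>n<N. (vnorm (mapply (phiU U (rho \<xi> lam \<gamma> n)) (\<lambda>i. f (0, i))))\<^sup>2)"
    by (rule power2_vnorm_mapply_ampl_column[OF bop_block[OF BI] slice(1)])
  also have "\<dots> \<le> column_norm_sq U (\<lambda>i. f (0, i))"
    unfolding column_norm_sq_def
    by (rule finite_sum_le_infsum[OF summable_column_norm_sq[OF BI slice(1)]]) auto
  also have "\<dots> \<le> omegaR R \<xi> P * (vnorm (\<lambda>i. f (0, i)))\<^sup>2"
    by (rule column_norm_sq_le_omegaR[OF assms(1) slice(1)])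
  also have "\<dots> \<le> omegaR R \<xi> P"
  proof (rule mult_left_le[OF _ omegaR_nonneg])
    show "(vnorm (\<lambda>i. f (0, i)))\<^sup>2 \<le> 1"
      using slice(2) assms(3) vnorm_nonneg[of "\<lambda>i. f (0, i)"] by (intro power_le_one) auto
  qed
  finally show ?thesis
    by (rule real_le_rsqrt)
qed

lemma opnorm_ampl_le:
  "(I, J, U) \<in> R \<Longrightarrow> opnorm ({..<N} \<times> I) (ampl U N (first_column (rho \<xi> lam \<gamma>))) \<le> sqrt (omegaR R \<xi> P)"
  by (rule opnorm_le) (rule norm_mapply_ampl_le)

lemma bdd_above_opnorm_ampl:
  "bdd_above ((\<lambda>t. case t of (I, J, U) \<Rightarrow> opnorm ({..<N} \<times> I) (ampl U N (first_column (rho \<xi> lam \<gamma>)))) ` R)"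
  by (rule bdd_aboveI[where M="sqrt (omegaR R \<xi> P)"]) (auto intro: opnorm_ampl_le)

lemma opnorm_ampl_le_MN1_norm:
  assumes "(I, J, U) \<in> R"
  shows "opnorm ({..<N} \<times> I) (ampl U N (first_column (rho \<xi> lam \<gamma>))) \<le> MN1_norm R (rho \<xi> lam \<gamma>) N"
  unfolding MN1_norm_eq Mn_norm_def by (rule cSUP_upper2[OF bdd_above_opnorm_ampl assms]) simp

lemma MN1_norm_le_sqrt_omegaR: "MN1_norm R (rho \<xi> lam \<gamma>) N \<le> sqrt (omegaR R \<xi> P)"
proof -
  obtain I J U i where "(I, J, U) \<in> R" "i \<in> I"
    by (rule R_has_basis_vector)
  then have "R \<noteq> {}"
    by blast
  then show ?thesis
    unfolding MN1_norm_eq Mn_norm_def by (rule cSUP_least) (auto intro: opnorm_ampl_le)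
qed

lemma Minf1_norm_le_sqrt_omegaR: "Minf1_norm R (rho \<xi> lam \<gamma>) \<le> sqrt (omegaR R \<xi> P)"
  unfolding Minf1_norm_def by (rule cSUP_least) (auto intro: MN1_norm_le_sqrt_omegaR)

lemma MN1_norm_le_Minf1_norm: "MN1_norm R (rho \<xi> lam \<gamma>) N \<le> Minf1_norm R (rho \<xi> lam \<gamma>)"
  unfolding Minf1_norm_def
  by (rule cSUP_upper) (auto intro: bdd_aboveI[where M="sqrt (omegaR R \<xi> P)"] MN1_norm_le_sqrt_omegaR)

lemma norm_mapply_ampl_le_Minf1_norm:
  assumes "(I, J, U) \<in> R" "l2 ({..<N} \<times> I) f" "vnorm f \<le> 1"
  shows "vnorm (mapply (ampl U N (first_column (rho \<xi> lam \<gamma>))) f) \<le> Minf1_norm R (rho \<xi> lam \<gamma>)"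
proof -
  have "vnorm (mapply (ampl U N (first_column (rho \<xi> lam \<gamma>))) f) \<le> opnorm ({..<N} \<times> I) (ampl U N (first_column (rho \<xi> lam \<gamma>)))"
    using norm_mapply_ampl_le[OF assms(1)] assms(2,3) by (rule norm_mapply_le_opnorm)
  also have "\<dots> \<le> Minf1_norm R (rho \<xi> lam \<gamma>)"
    using opnorm_ampl_le_MN1_norm[OF assms(1)] MN1_norm_le_Minf1_norm by (rule order_trans)
  finally show ?thesis .
qed

lemma Minf1_norm_nonneg: "0 \<le> Minf1_norm R (rho \<xi> lam \<gamma>)"
proof -
  obtain I J U i where "(I, J, U) \<in> R" "i \<in> I"
    by (rule R_has_basis_vector)
  from norm_mapply_ampl_le_Minf1_norm[OF this(1), of 0 "\<lambda>_. 0"]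
  show ?thesis
    by simp
qed

lemma sum_column_le_Minf1_norm:
  assumes R: "(I, J, U) \<in> R" and u: "l2 I u" "vnorm u = 1" and "0 < N"
  shows "(\<Sum>n<N. (vnorm (mapply (phiU U (rho \<xi> lam \<gamma> n)) u))\<^sup>2) \<le> (Minf1_norm R (rho \<xi> lam \<gamma>))\<^sup>2"
proof -
  define f where "f = (\<lambda>(l :: nat, i). if l = 0 then u i else 0)"
  have "0 \<in> {..<N}"
    using \<open>0 < N\<close> by simp
  from l2_Pair_embed[OF u(1) this] u(2)
  have f: "l2 ({..<N} \<times> I) f" "vnorm f = 1"
    unfolding f_def by simp_all
  have slice: "(\<lambda>i. f (0, i)) = u"
    by (simp add: f_def)
  have "(vnorm (mapply (ampl U N (first_column (rho \<xi> lam \<gamma>))) f))\<^sup>2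
      = (\<Sum>n<N. (vnorm (mapply (phiU U (rho \<xi> lam \<gamma> n)) (\<lambda>i. f (0, i))))\<^sup>2)"
    by (rule power2_vnorm_mapply_ampl_column[OF bop_block[OF block_isometry_R[OF R]]]) (simp add: slice u(1))
  then have "(\<Sum>n<N. (vnorm (mapply (phiU U (rho \<xi> lam \<gamma> n)) u))\<^sup>2)
      = (vnorm (mapply (ampl U N (first_column (rho \<xi> lam \<gamma>))) f))\<^sup>2"
    by (simp only: slice)
  also have "\<dots> \<le> (Minf1_norm R (rho \<xi> lam \<gamma>))\<^sup>2"
    using norm_mapply_ampl_le_Minf1_norm[OF R f(1)] f(2) by (intro power_mono vnorm_nonneg) auto
  finally show ?thesis .
qed

lemma column_norm_sq_le_Minf1_norm:
  assumes R: "(I, J, U) \<in> R" and w: "l2 I w"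
  shows "column_norm_sq U w \<le> (Minf1_norm R (rho \<xi> lam \<gamma>))\<^sup>2 * (vnorm w)\<^sup>2"
proof (rule column_norm_sq_le[OF w])
  fix u
  assume u: "l2 I u" "vnorm u = 1"
  show "column_norm_sq U u \<le> (Minf1_norm R (rho \<xi> lam \<gamma>))\<^sup>2"
    unfolding column_norm_sq_def
  proof (rule infsum_le_finite_sums[OF summable_column_norm_sq[OF block_isometry_R[OF R] u(1)]])
    fix F :: "nat set"
    assume "finite F" "F \<subseteq> UNIV"
    then obtain N where "F \<subseteq> {..<N}"
      using finite_nat_bounded by blast
    then have "(\<Sum>n\<in>F. (vnorm (mapply (phiU U (rho \<xi> lam \<gamma> n)) u))\<^sup>2)
        \<le> (\<Sum>n<Suc N. (vnorm (mapply (phiU U (rho \<xi> lam \<gamma> n)) u))\<^sup>2)"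
      by (intro sum_mono2) auto
    also have "\<dots> \<le> (Minf1_norm R (rho \<xi> lam \<gamma>))\<^sup>2"
      by (rule sum_column_le_Minf1_norm[OF R u]) simp
    finally show "(\<Sum>n\<in>F. (vnorm (mapply (phiU U (rho \<xi> lam \<gamma> n)) u))\<^sup>2) \<le> (Minf1_norm R (rho \<xi> lam \<gamma>))\<^sup>2" .
  qed
qed

lemma omegaR_le_Minf1_norm: "omegaR R \<xi> P \<le> (Minf1_norm R (rho \<xi> lam \<gamma>))\<^sup>2"
  unfolding omegaR_eq_Sup
proof (rule cSup_least)
  obtain I J U i where R: "(I, J, U) \<in> R" and i: "i \<in> I"
    by (rule R_has_basis_vector)
  have "GammaU U (\<lambda>T. vinner (mapply T (evec i)) (evec i)) \<in> QC R"
    using R normal_state_vector[OF l2_evec[OF i] vnorm_evec] unfolding QC_def by blast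
  then show "channel_value ` QC R \<noteq> {}"
    by blast
next
  fix s
  assume "s \<in> channel_value ` QC R"
  then obtain \<Gamma> where "\<Gamma> \<in> QC R" and s: "s = channel_value \<Gamma>"
    by blast
  then obtain I J U \<sigma> where \<Gamma>: "\<Gamma> = GammaU U \<sigma>" and R: "(I, J, U) \<in> R" and \<sigma>: "normal_state I \<sigma>"
    unfolding QC_def by blast
  obtain v where "state_setting \<xi> P Nidx lam \<gamma> I J U v \<sigma>"
    using state_setting_of_normal_state[OF block_isometry_R[OF R] \<sigma>] .
  then interpret state: state_setting \<xi> P Nidx lam \<gamma> I J U v \<sigma> .
  have "((\<lambda>k. (Minf1_norm R (rho \<xi> lam \<gamma>))\<^sup>2 * (vnorm (v k))\<^sup>2) has_sum (Minf1_norm R (rho \<xi> lam \<gamma>))\<^sup>2) UNIV"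
    using has_sum_cmult_right[OF state.has_sum_vnorm_v] by simp
  then show "s \<le> (Minf1_norm R (rho \<xi> lam \<gamma>))\<^sup>2"
    unfolding s \<Gamma>
    by (rule has_sum_mono[OF state.has_sum_column_norm_sq]) (rule column_norm_sq_le_Minf1_norm[OF R state.l2_v])
qed

end

theorem theorem4p7:
  fixes R :: "('u set \<times> 'u set \<times> ('a::finite \<Rightarrow> 'x::finite \<Rightarrow> 'u \<Rightarrow> 'u \<Rightarrow> complex)) set"
    and \<xi> :: "'x \<times> 'r \<Rightarrow> complex"
    and P :: "'a \<times> 'r \<Rightarrow> 'a \<times> 'r \<Rightarrow> complex"
    and Nidx :: "nat set" and lam :: "nat \<Rightarrow> real" and \<gamma> :: "nat \<Rightarrow> 'a \<times> 'r \<Rightarrow> complex"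
  assumes "resource R"
    and "l2 UNIV \<xi>" and "vnorm \<xi> = 1"
    and "bop UNIV UNIV P" and "positive_op P" and "opnorm UNIV P \<le> 1"
    and "spectral_decomp P Nidx lam \<gamma>"
  shows "omegaR R \<xi> P = (Minf1_norm R (rho \<xi> lam \<gamma>))\<^sup>2"
proof -
  interpret resource_setting \<xi> P Nidx lam \<gamma> R
    using assms by unfold_locales
  have "Minf1_norm R (rho \<xi> lam \<gamma>) \<le> sqrt (omegaR R \<xi> P)"
    by (rule Minf1_norm_le_sqrt_omegaR)
  then have "(Minf1_norm R (rho \<xi> lam \<gamma>))\<^sup>2 \<le> (sqrt (omegaR R \<xi> P))\<^sup>2"
    by (rule power_mono[OF _ Minf1_norm_nonneg])
  then have "(Minf1_norm R (rho \<xi> lam \<gamma>))\<^sup>2 \<le> omegaR R \<xi> P"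
    using omegaR_nonneg by simp
  with omegaR_le_Minf1_norm show ?thesis
    by simp
qed

end
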